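(* Assume $f_j'(u)+1\ne0$ and $f_j''(u)\ne0$ for all $u$ and all $1\le j\le k$, and let $\ell\ge2$. For $P\in\mathcal M_F$ and a normalized basis $\mathcal B=\{U_0,\dots,U_k,V_0,\dots,V_k,S_1,\dots,S_k\}$ of $(T_P\mathcal M_F,g_F|_P,R_P)$ define $$(\beta_\ell)_{\mathcal B}=\sum_{j=1}^k\frac{\nabla^\ell R(U_0,U_j,U_j,S_j;U_j,\dots,U_j)}{\bigl(\nabla R(U_0,U_j,U_j,S_j;U_j)\bigr)^{\ell}}.$$ Then $(\beta_\ell)_{\mathcal B}$ is independent of the choice of normalized basis $\mathcal B$ of $T_P\mathcal M_F$.
   Context: Fix an integer $k\ge 1$ and signs $\varepsilon_1,\dots,\varepsilon_k\in\{\pm1\}$. Let $f_1,\dots,f_k:\mathbb R\to\mathbb R$ be smooth, $F=(f_1,\dots,f_k)$. On $\mathbb R^{3k+2}$ with coordinates $(u_0,\dots,u_k,v_0,\dots,v_k,s_1,\dots,s_k)$ let $g_F$ be the symmetric metric whose only nonzero components on coordinate vector fields are (up to symmetry), for $1\le i\le k$ and $0\le i',j\le k$: $g_F(\partial_{u_0},\partial_{u_i})=2f_i(u_i)s_i$, $g_F(\partial_{u_i},\partial_{u_i})=-2u_0s_i$, $g_F(\partial_{u_{i'}},\partial_{v_j})=\delta_{i'j}$, $g_F(\partial_{s_i},\partial_{s_i})=\varepsilon_i$; $\mathcal M_F=(\mathbb R^{3k+2},g_F)$. $\nabla$ is the Levi-Civita connection, $R(X,Y,Z,W)=g_F(\nabla_X\nabla_YZ-\nabla_Y\nabla_XZ-\nabla_{[X,Y]}Z,W)$,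 and $\nabla^\ell R(X_1,\dots,X_4;Y_1,\dots,Y_\ell)=(\nabla_{Y_\ell}\nabla^{\ell-1}R)(X_1,\dots,X_4;Y_1,\dots,Y_{\ell-1})$. A normalized basis of $(T_P\mathcal M_F,g_F|_P,R_P)$ is a basis $\{U_0,\dots,U_k,V_0,\dots,V_k,S_1,\dots,S_k\}$ on which the only nonzero values of $g_F|_P$ on pairs of basis vectors are $g(U_i,V_i)=1$ ($0\le i\le k$) and $g(S_i,S_i)=\varepsilon_i$ ($1\le i\le k$), and the only nonzero values of $R_P$ on 4-tuples of basis vectors are those obtained from $R(U_0,U_i,U_i,S_i)=1$ ($1\le i\le k$) via the curvature symmetries $R(x,y,z,w)=-R(y,x,z,w)=R(z,w,x,y)$. *)

theory Defs
  imports "HOL-Analysis.Analysis"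
begin

text \<open>Points and tangent vectors are functions nat => real; only the components
with index < N are relevant. A metric is given by its components
g x a b = g(d_a, d_b) at the point x.\<close>

definition pd :: "nat \<Rightarrow> ((nat \<Rightarrow> real) \<Rightarrow> real) \<Rightarrow> (nat \<Rightarrow> real) \<Rightarrow> real" where
  "pd a h x = deriv (\<lambda>t. h (x(a := x a + t))) 0"

definition ginv :: "nat \<Rightarrow> ((nat \<Rightarrow> real) \<Rightarrow> nat \<Rightarrow> nat \<Rightarrow> real) \<Rightarrow> (nat \<Rightarrow> real) \<Rightarrow> nat \<Rightarrow> nat \<Rightarrow> real" where
  "ginv N g x = (SOME h. \<forall>a<N. \<forall>b<N. (\<Sum>c<N. g x a c * h c b) = (if a = b then 1 else 0))"

text \<open>Christoffel symbols Gamma^c_{ab}: nabla_{d_a} d_b = sum_c Gamma^c_{ab} d_c.\<close>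
definition chr :: "nat \<Rightarrow> ((nat \<Rightarrow> real) \<Rightarrow> nat \<Rightarrow> nat \<Rightarrow> real) \<Rightarrow> nat \<Rightarrow> nat \<Rightarrow> nat \<Rightarrow> (nat \<Rightarrow> real) \<Rightarrow> real" where
  "chr N g c a b x = 1/2 * (\<Sum>d<N. ginv N g x c d *
      (pd a (\<lambda>y. g y b d) x + pd b (\<lambda>y. g y a d) x - pd d (\<lambda>y. g y a b) x))"

text \<open>Covariant tensor fields: components T x [i1,...,im].\<close>
type_synonym tfield = "(nat \<Rightarrow> real) \<Rightarrow> nat list \<Rightarrow> real"

text \<open>R(d_a,d_b,d_c,d_d) = g(nabla_a nabla_b d_c - nabla_b nabla_a d_c, d_d).\<close>
definition curv :: "nat \<Rightarrow> ((nat \<Rightarrow> real) \<Rightarrow> nat \<Rightarrow> nat \<Rightarrow> real) \<Rightarrow> tfield" where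
  "curv N g y is = (case is of
      [a, b, c, d] \<Rightarrow> (\<Sum>f<N. g y f d *
          (pd a (chr N g f b c) y - pd b (chr N g f a c) y
           + (\<Sum>e<N. chr N g e b c y * chr N g f a e y - chr N g e a c y * chr N g f b e y)))
    | _ \<Rightarrow> 0)"

text \<open>Covariant derivative; the differentiation direction is the LAST slot:
(nabla T)(X_1..X_m; Y) = (nabla_Y T)(X_1..X_m).\<close>
definition cov :: "nat \<Rightarrow> ((nat \<Rightarrow> real) \<Rightarrow> nat \<Rightarrow> nat \<Rightarrow> real) \<Rightarrow> tfield \<Rightarrow> tfield" where
  "cov N g T y is = (let a = last is; js = butlast is in
      pd a (\<lambda>z. T z js) y
      - (\<Sum>p<length js. \<Sum>c<N. chr N g c a (js ! p) y * T y (js[p := c])))"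

definition teval :: "nat \<Rightarrow> tfield \<Rightarrow> (nat \<Rightarrow> real) \<Rightarrow> (nat \<Rightarrow> real) list \<Rightarrow> real" where
  "teval N T y Xs = (\<Sum>is \<in> {is. length is = length Xs \<and> set is \<subseteq> {..<N}}.
      T y is * (\<Prod>p<length Xs. (Xs ! p) (is ! p)))"

definition gval :: "nat \<Rightarrow> ((nat \<Rightarrow> real) \<Rightarrow> nat \<Rightarrow> nat \<Rightarrow> real) \<Rightarrow> (nat \<Rightarrow> real) \<Rightarrow> (nat \<Rightarrow> real) \<Rightarrow> (nat \<Rightarrow> real) \<Rightarrow> real" where
  "gval N g y X Y = (\<Sum>a<N. \<Sum>b<N. g y a b * X a * Y b)"

text \<open>Coordinates: u_i has index i (0 <= i <= k), v_i has index k+1+i (0 <= i <= k),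
s_i has index 2k+1+i (1 <= i <= k). Dimension 3k+2.\<close>

definition dimF :: "nat \<Rightarrow> nat" where "dimF k = 3 * k + 2"

definition gF :: "nat \<Rightarrow> (nat \<Rightarrow> real \<Rightarrow> real) \<Rightarrow> (nat \<Rightarrow> real) \<Rightarrow> (nat \<Rightarrow> real) \<Rightarrow> nat \<Rightarrow> nat \<Rightarrow> real" where
  "gF k F eps x a b =
    (if a = 0 \<and> 1 \<le> b \<and> b \<le> k then 2 * F b (x b) * x (2 * k + 1 + b)
     else if b = 0 \<and> 1 \<le> a \<and> a \<le> k then 2 * F a (x a) * x (2 * k + 1 + a)
     else if a = b \<and> 1 \<le> a \<and> a \<le> k then - 2 * x 0 * x (2 * k + 1 + a)
     else if a \<le> k \<and> b = k + 1 + a then 1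
     else if b \<le> k \<and> a = k + 1 + b then 1
     else if a = b \<and> 2 * k + 2 \<le> a \<and> a \<le> 3 * k + 1 then eps (a - (2 * k + 1))
     else 0)"

text \<open>Model values of the metric on a normalized basis, indexed like the coordinates:
U_i = B i, V_i = B (k+1+i), S_i = B (2k+1+i).\<close>
definition gmodel :: "nat \<Rightarrow> (nat \<Rightarrow> real) \<Rightarrow> nat \<Rightarrow> nat \<Rightarrow> real" where
  "gmodel k eps a b =
    (if a \<le> k \<and> b = k + 1 + a then 1
     else if b \<le> k \<and> a = k + 1 + b then 1
     else if a = b \<and> 2 * k + 2 \<le> a \<and> a \<le> 3 * k + 1 then eps (a - (2 * k + 1))
     else 0)"

text \<open>Model values of the curvature: the orbit of R(U_0,U_i,U_i,S_i) = 1 under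
R(x,y,z,w) = -R(y,x,z,w) = R(z,w,x,y) (hence also = -R(x,y,w,z)), all other values 0.\<close>
definition Rmodel :: "nat \<Rightarrow> nat \<Rightarrow> nat \<Rightarrow> nat \<Rightarrow> nat \<Rightarrow> real" where
  "Rmodel k a b c d =
    (\<Sum>i\<in>{1..k}. let s = 2 * k + 1 + i in
       (if (a, b, c, d) = (0, i, i, s) then 1 else 0)
     + (if (a, b, c, d) = (i, 0, i, s) then -1 else 0)
     + (if (a, b, c, d) = (0, i, s, i) then -1 else 0)
     + (if (a, b, c, d) = (i, 0, s, i) then 1 else 0)
     + (if (a, b, c, d) = (i, s, 0, i) then 1 else 0)
     + (if (a, b, c, d) = (s, i, 0, i) then -1 else 0)
     + (if (a, b, c, d) = (i, s, i, 0) then -1 else 0)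
     + (if (a, b, c, d) = (s, i, i, 0) then 1 else 0))"

definition normalized_basis ::
  "nat \<Rightarrow> (nat \<Rightarrow> real \<Rightarrow> real) \<Rightarrow> (nat \<Rightarrow> real) \<Rightarrow> (nat \<Rightarrow> real) \<Rightarrow> (nat \<Rightarrow> nat \<Rightarrow> real) \<Rightarrow> bool" where
  "normalized_basis k F eps P B \<longleftrightarrow>
     (\<forall>c. (\<forall>j<dimF k. (\<Sum>i<dimF k. c i * B i j) = 0) \<longrightarrow> (\<forall>i<dimF k. c i = 0)) \<and>
     (\<forall>a<dimF k. \<forall>b<dimF k. gval (dimF k) (gF k F eps) P (B a) (B b) = gmodel k eps a b) \<and>
     (\<forall>a<dimF k. \<forall>b<dimF k. \<forall>c<dimF k. \<forall>d<dimF k.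
        teval (dimF k) (curv (dimF k) (gF k F eps)) P [B a, B b, B c, B d] = Rmodel k a b c d)"

definition beta :: "nat \<Rightarrow> (nat \<Rightarrow> real \<Rightarrow> real) \<Rightarrow> (nat \<Rightarrow> real) \<Rightarrow> nat \<Rightarrow> (nat \<Rightarrow> real) \<Rightarrow> (nat \<Rightarrow> nat \<Rightarrow> real) \<Rightarrow> real" where
  "beta k F eps l P B =
    (let N = dimF k; g = gF k F eps; R = curv N g in
     (\<Sum>j\<in>{1..k}.
        teval N ((cov N g ^^ l) R) P ([B 0, B j, B j, B (2 * k + 1 + j)] @ replicate l (B j))
        / (teval N (cov N g R) P [B 0, B j, B j, B (2 * k + 1 + j), B j]) ^ l))"

definition smooth_real :: "(real \<Rightarrow> real) \<Rightarrow> bool" where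
  "smooth_real f \<longleftrightarrow> (\<forall>n x. ((deriv ^^ n) f) differentiable (at x))"

end

theory Submission
  imports Defs "Jordan_Normal_Form.Determinant"
begin

text \<open>
  Away from its components with four \<open>u\<close>-indices, the curvature of \<open>M\<^sub>F\<close> is
  \<open>\<Sum>\<^sub>i (1 + f\<^sub>i'(u\<^sub>i)) (du\<^sub>0 \<and> du\<^sub>i) \<odot> (du\<^sub>i \<and> ds\<^sub>i)\<close>. No Christoffel symbol has an upper
  \<open>u\<close>-index, so on the same components covariant differentiation only differentiates the
  coefficients: \<open>\<nabla>\<^sup>l R\<close> replaces \<open>1 + f\<^sub>i'\<close> by the \<open>(l+1)\<close>-st derivative of \<open>f\<^sub>i\<close> and appends
  \<open>l\<close> factors \<open>du\<^sub>i\<close>. In a normalized basis the \<open>S\<^sub>j\<close> have no \<open>u\<close>-components, so only this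
  part of \<open>\<nabla>\<^sup>l R\<close> enters \<open>\<beta>\<^sub>l\<close>. Testing the curvature and the metric against the coordinate
  vectors \<open>\<partial>/\<partial>v\<^sub>m\<close> and \<open>\<partial>/\<partial>s\<^sub>m\<close> shows that the \<open>u\<close>-part of \<open>U\<^sub>0\<close> is a nonzero multiple of
  \<open>\<partial>/\<partial>u\<^sub>0\<close> and that the \<open>(u\<^sub>1, \<dots>, u\<^sub>k)\<close>-parts of \<open>U\<^sub>1, \<dots>, U\<^sub>k\<close> form a monomial matrix. If
  \<open>U\<^sub>j\<close> has its entry at \<open>u\<^sub>i\<close>, the normalization \<open>R(U\<^sub>0, U\<^sub>j, U\<^sub>j, S\<^sub>j) = 1\<close> cancels all
  scalings in the \<open>j\<close>-th summand of \<open>\<beta>\<^sub>l\<close>, which becomes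
  \<open>f\<^sub>i\<^sup>(\<^sup>l\<^sup>+\<^sup>1\<^sup>) (1 + f\<^sub>i')\<^sup>l\<^sup>-\<^sup>1 / (f\<^sub>i'')\<^sup>l\<close> at \<open>P\<close>; summing over \<open>j\<close> only permutes these terms.
\<close>

lemma sum_eq_single:
  assumes "finite S" "x \<in> S" "\<And>y. y \<in> S \<Longrightarrow> y \<noteq> x \<Longrightarrow> f y = 0"
  shows "sum f S = f x"
proof -
  have "sum f S = f x + sum f (S - {x})" using assms by (simp add: sum.remove)
  also have "sum f (S - {x}) = 0" using assms by (intro sum.neutral) auto
  finally show ?thesis by simp
qed

lemma sum_if_eq_conj:
  fixes f :: "'a \<Rightarrow> real"
  assumes "finite S"
  shows "(\<Sum>m\<in>S. if m = a \<and> P m then f m else 0) = (if a \<in> S \<and> P a then f a else 0)"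
    and "(\<Sum>m\<in>S. if a = m \<and> P m then f m else 0) = (if a \<in> S \<and> P a then f a else 0)"
proof -
  have "(\<Sum>m\<in>S. if m = a \<and> P m then f m else 0) = (\<Sum>m\<in>S. if m = a then (if P a then f a else 0) else 0)"
    by (rule sum.cong) auto
  then show "(\<Sum>m\<in>S. if m = a \<and> P m then f m else 0) = (if a \<in> S \<and> P a then f a else 0)"
    using assms by simp
  then show "(\<Sum>m\<in>S. if a = m \<and> P m then f m else 0) = (if a \<in> S \<and> P a then f a else 0)"
    by (simp add: eq_commute)
qed

lemma sum_two_points:
  fixes u v :: real
  assumes "finite S" "x1 \<in> S" "x2 \<in> S" "x1 \<noteq> x2"
  shows "(\<Sum>a\<in>S. if a = x1 then u else if a = x2 then v else 0) = u + v"
proof -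
  have "(\<Sum>a\<in>S. if a = x1 then u else if a = x2 then v else 0) =
      (\<Sum>a\<in>S. if a = x1 then u else 0) + (\<Sum>a\<in>S. if a = x2 then v else 0)"
    unfolding sum.distrib[symmetric] by (rule sum.cong) (use assms in auto)
  then show ?thesis using assms by simp
qed

lemma sum_sum_add:
  fixes f g :: "'a \<Rightarrow> 'b \<Rightarrow> real"
  shows "(\<Sum>c\<in>S. X c * (\<Sum>d\<in>T. Y d * (f c d + g c d))) =
    (\<Sum>c\<in>S. X c * (\<Sum>d\<in>T. Y d * f c d)) + (\<Sum>c\<in>S. X c * (\<Sum>d\<in>T. Y d * g c d))"
  by (simp add: sum.distrib distrib_left)

lemma less_4_cases: "(p::nat) < 4 \<Longrightarrow> p = 0 \<or> p = 1 \<or> p = 2 \<or> p = 3"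
  by auto

lemma ratio_power_cancel:
  fixes D0 D1 Dl w q :: real
  assumes w: "D0 * w = 1" and q: "q \<noteq> 0" and l: "l \<ge> 1"
  shows "(Dl * (w * q ^ l)) / (D1 * (w * q)) ^ l = Dl * D0 ^ (l - 1) / D1 ^ l"
proof (cases "D1 = 0")
  case True
  then show ?thesis using l by simp
next
  case False
  obtain l' where l': "l = Suc l'" using l by (cases l) auto
  have "w ^ l' * D0 ^ l' = 1" using w by (metis power_mult_distrib power_one mult.commute)
  moreover have "D0 \<noteq> 0" "w \<noteq> 0" using w by auto
  ultimately show ?thesis using l' False q by (simp add: field_simps power_mult_distrib)
qed

lemma if_zero_mult_simps:
  fixes x y :: real
  shows "(if P then x else 0) * y = (if P then x * y else 0)"
    and "y * (if P then x else 0) = (if P then y * x else 0)"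
    and "(if P then (if Q then x else 0) else 0) = (if P \<and> Q then x else 0)"
    and "- (if P then x else 0) = (if P then - x else 0)"
  by simp_all

lemma Suc_0_le_iff: "Suc 0 \<le> m \<longleftrightarrow> m \<noteq> 0"
  by auto

lemmas if_zero_simps = Suc_0_le_iff if_zero_mult_simps sum_if_eq_conj

definition has_pd :: "nat \<Rightarrow> ((nat \<Rightarrow> real) \<Rightarrow> real) \<Rightarrow> (nat \<Rightarrow> real) \<Rightarrow> real \<Rightarrow> bool" where
  "has_pd a h y D \<longleftrightarrow> ((\<lambda>t. h (y(a := y a + t))) has_real_derivative D) (at 0)"

lemma pd_eqI: "has_pd a h y D \<Longrightarrow> pd a h y = D"
  unfolding has_pd_def pd_def by (rule DERIV_imp_deriv)

lemma has_pd_eq_rhs: "has_pd a h y D \<Longrightarrow> D = D' \<Longrightarrow> has_pd a h y D'"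
  by simp

lemma has_pd_const: "has_pd a (\<lambda>z. c) y 0"
  unfolding has_pd_def by simp

lemma has_pd_coord: "has_pd a (\<lambda>z. z j) y (if j = a then 1 else 0)"
  unfolding has_pd_def by (cases "j = a") (auto intro!: derivative_eq_intros)

lemma has_pd_add: "has_pd a h1 y D1 \<Longrightarrow> has_pd a h2 y D2 \<Longrightarrow> has_pd a (\<lambda>z. h1 z + h2 z) y (D1 + D2)"
  unfolding has_pd_def by (rule DERIV_add)

lemma has_pd_minus: "has_pd a h y D \<Longrightarrow> has_pd a (\<lambda>z. - h z) y (- D)"
  unfolding has_pd_def by (rule DERIV_minus)

lemma has_pd_mult:
  "has_pd a h1 y D1 \<Longrightarrow> has_pd a h2 y D2 \<Longrightarrow> has_pd a (\<lambda>z. h1 z * h2 z) y (D1 * h2 y + h1 y * D2)"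
  unfolding has_pd_def by (drule DERIV_mult) (auto simp: mult.commute)

lemma has_pd_sum:
  "finite S \<Longrightarrow> (\<And>n. n \<in> S \<Longrightarrow> has_pd a (\<lambda>z. h z n) y (D n)) \<Longrightarrow>
   has_pd a (\<lambda>z. \<Sum>n\<in>S. h z n) y (\<Sum>n\<in>S. D n)"
  unfolding has_pd_def by (rule DERIV_sum)

lemma has_pd_comp_coord:
  assumes "\<phi> differentiable (at (y j))"
  shows "has_pd a (\<lambda>z. \<phi> (z j)) y (if j = a then deriv \<phi> (y j) else 0)"
proof (cases "j = a")
  case True
  have "(\<phi> has_real_derivative deriv \<phi> (y j)) (at (0 + y j))"
    using assms DERIV_deriv_iff_real_differentiable by auto
  then have "((\<lambda>t. \<phi> (t + y j)) has_real_derivative deriv \<phi> (y j)) (at 0)"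
    by (simp only: DERIV_shift)
  then show ?thesis using True unfolding has_pd_def by (simp add: add.commute)
qed (simp add: has_pd_def)

lemma pd_if: "pd a (\<lambda>z. if P then h1 z else h2 z) y = (if P then pd a h1 y else pd a h2 y)"
  by (cases P) auto

lemma pd_const: "pd a (\<lambda>z. c) y = 0"
  by (rule pd_eqI[OF has_pd_const])

lemma smooth_real_differentiable: "smooth_real f \<Longrightarrow> ((deriv ^^ n) f) differentiable (at x)"
  unfolding smooth_real_def by blast

lemma lists_bounded_Suc:
  "{is. length is = Suc n \<and> set is \<subseteq> {..<N}} =
   (\<lambda>(a, is). a # is) ` ({..<N} \<times> {is. length is = n \<and> set is \<subseteq> {..<N}})"
  by (auto simp: image_iff length_Suc_conv)

lemma teval_Nil: "teval N T y [] = T y []"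
proof -
  have "{is. length is = length ([] :: (nat \<Rightarrow> real) list) \<and> set is \<subseteq> {..<N}} = {[]}" by auto
  then show ?thesis unfolding teval_def by simp
qed

lemma teval_Cons: "teval N T y (X # Xs) = (\<Sum>a<N. X a * teval N (\<lambda>y is. T y (a # is)) y Xs)"
proof -
  let ?L = "{is. length is = length Xs \<and> set is \<subseteq> {..<N}}"
  have inj: "inj_on (\<lambda>(a, is). a # is) ({..<N} \<times> ?L)" by (auto simp: inj_on_def)
  have "teval N T y (X # Xs) =
      (\<Sum>is\<in>(\<lambda>(a, is). a # is) ` ({..<N} \<times> ?L). T y is * (\<Prod>p<Suc (length Xs). ((X # Xs) ! p) (is ! p)))"
    unfolding teval_def length_Cons lists_bounded_Suc ..
  also have "\<dots> = (\<Sum>a<N. \<Sum>is\<in>?L. T y (a # is) * (\<Prod>p<Suc (length Xs). ((X # Xs) ! p) ((a # is) ! p)))"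
    by (subst sum.reindex[OF inj]) (simp add: sum.cartesian_product split_def)
  also have "\<dots> = (\<Sum>a<N. \<Sum>is\<in>?L. T y (a # is) * (X a * (\<Prod>p<length Xs. (Xs ! p) (is ! p))))"
    by (simp only: prod.lessThan_Suc_shift nth_Cons_0 nth_Cons_Suc)
  also have "\<dots> = (\<Sum>a<N. X a * teval N (\<lambda>y is. T y (a # is)) y Xs)"
    unfolding teval_def by (simp add: sum_distrib_left mult.assoc mult.left_commute)
  finally show ?thesis .
qed

lemma cov_snoc: "cov N g T y (js @ [a]) =
    pd a (\<lambda>z. T z js) y - (\<Sum>p<length js. \<Sum>c<N. chr N g c a (js ! p) y * T y (js[p := c]))"
  unfolding cov_def Let_def by simp

lemma teval_cong:
  assumes "length Xs = length Ys" "\<And>p n. p < length Xs \<Longrightarrow> n < N \<Longrightarrow> (Xs ! p) n = (Ys ! p) n"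
  shows "teval N T y Xs = teval N T y Ys"
  unfolding teval_def
proof (rule sum.cong)
  fix "is" assume "is \<in> {is. length is = length Ys \<and> set is \<subseteq> {..<N}}"
  then have "\<And>p. p < length Xs \<Longrightarrow> is ! p < N"
    using assms(1) by (metis (mono_tags, lifting) lessThan_iff mem_Collect_eq nth_mem subsetD)
  then show "T y is * (\<Prod>p<length Xs. (Xs ! p) (is ! p)) = T y is * (\<Prod>p<length Ys. (Ys ! p) (is ! p))"
    using assms by (auto intro!: prod.cong)
qed (use assms(1) in simp)

lemma teval_cong_field:
  assumes "\<And>is. length is = length Xs \<Longrightarrow> set is \<subseteq> {..<N} \<Longrightarrow>
             (\<Prod>p<length Xs. (Xs ! p) (is ! p)) \<noteq> 0 \<Longrightarrow> T y is = T' y is"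
  shows "teval N T y Xs = teval N T' y Xs"
  unfolding teval_def by (rule sum.cong[OF refl]) (use assms in force)

lemma teval_sum_field:
  "finite S \<Longrightarrow> teval N (\<lambda>y is. \<Sum>i\<in>S. c i * T i y is) y Xs = (\<Sum>i\<in>S. c i * teval N (T i) y Xs)"
  unfolding teval_def by (simp add: sum_distrib_right sum_distrib_left mult.assoc sum.swap[of _ S])

lemma teval_scale_field: "teval N (\<lambda>y is. c * T y is) y Xs = c * teval N T y Xs"
  unfolding teval_def by (simp add: sum_distrib_left mult.assoc)

lemma teval_linear_slot:
  assumes p: "p < length Xs" and S: "finite S"
  shows "teval N T y (Xs[p := (\<lambda>n. \<Sum>b\<in>S. c b * Y b n)]) = (\<Sum>b\<in>S. c b * teval N T y (Xs[p := Y b]))"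
proof -
  have split_slot: "(\<Prod>q<length Xs. ((Xs[p := Z]) ! q) (is ! q)) =
      Z (is ! p) * (\<Prod>q\<in>{..<length Xs} - {p}. (Xs ! q) (is ! q))" for Z "is"
  proof -
    have "(\<Prod>q<length Xs. ((Xs[p := Z]) ! q) (is ! q)) =
        ((Xs[p := Z]) ! p) (is ! p) * (\<Prod>q\<in>{..<length Xs} - {p}. ((Xs[p := Z]) ! q) (is ! q))"
      using p by (subst prod.remove[of _ p]) auto
    also have "\<dots> = Z (is ! p) * (\<Prod>q\<in>{..<length Xs} - {p}. (Xs ! q) (is ! q))"
      using p by (auto intro!: prod.cong)
    finally show ?thesis .
  qed
  show ?thesis
    unfolding teval_def length_list_update split_slot
    by (simp add: sum_distrib_right sum_distrib_left mult.assoc mult.left_commute sum.swap[of _ S])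
qed

lemma teval_diagonal_indicator:
  assumes "i < N"
  shows "teval N (\<lambda>y is. if \<forall>x\<in>set is. x = i then 1 else 0) y Ys = (\<Prod>Y\<leftarrow>Ys. Y i)"
proof (induction Ys)
  case Nil
  then show ?case by (simp add: teval_Nil)
next
  case (Cons Y Ys)
  have "teval N (\<lambda>y is. if \<forall>x\<in>set is. x = i then 1 else 0) y (Y # Ys)
      = (\<Sum>a<N. if a = i then Y i * teval N (\<lambda>y is. if \<forall>x\<in>set is. x = i then 1 else 0) y Ys else 0)"
    unfolding teval_Cons by (rule sum.cong[OF refl]) (simp add: teval_def)
  also have "\<dots> = Y i * (\<Prod>Y\<leftarrow>Ys. Y i)" using assms Cons by simp
  finally show ?case by simp
qed

lemma gval_linear_right:
  "finite S \<Longrightarrow> gval N g y X (\<lambda>n. \<Sum>b\<in>S. c b * Y b n) = (\<Sum>b\<in>S. c b * gval N g y X (Y b))"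
  unfolding gval_def
  by (simp add: sum_distrib_left sum_distrib_right mult.assoc mult.left_commute sum.swap[of _ S])

lemma gval_cong_right: "(\<And>n. n < N \<Longrightarrow> Y n = Y' n) \<Longrightarrow> gval N g y X Y = gval N g y X Y'"
  unfolding gval_def by (intro sum.cong refl) auto

definition unit_vec :: "nat \<Rightarrow> nat \<Rightarrow> real" where
  "unit_vec m n = (if n = m then 1 else 0)"

lemma independent_imp_spans_coord:
  fixes B :: "nat \<Rightarrow> nat \<Rightarrow> real"
  assumes indep: "\<forall>c. (\<forall>j<N. (\<Sum>i<N. c i * B i j) = 0) \<longrightarrow> (\<forall>i<N. c i = 0)"
    and m: "m < N"
  shows "\<exists>c. \<forall>n<N. (\<Sum>b<N. c b * B b n) = (if n = m then 1 else 0)"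
proof -
  define M :: "real Matrix.mat" where "M = Matrix.mat N N (\<lambda>(j, i). B i j)"
  have M_carrier: "M \<in> carrier_mat N N" unfolding M_def by simp
  have "Determinant.det M \<noteq> 0"
  proof
    assume "Determinant.det M = 0"
    then obtain v where v: "v \<in> carrier_vec N" "v \<noteq> 0\<^sub>v N" "M *\<^sub>v v = 0\<^sub>v N"
      using det_0_iff_vec_prod_zero_field[OF M_carrier] by auto
    have "\<forall>j<N. (\<Sum>i<N. v $ i * B i j) = 0"
    proof (intro allI impI)
      fix j assume j: "j < N"
      have "(M *\<^sub>v v) $ j = 0" using v(3) j by simp
      then show "(\<Sum>i<N. v $ i * B i j) = 0"
        using j v(1) unfolding M_def
        by (simp add: mult_mat_vec_def scalar_prod_def lessThan_atLeast0 mult.commute)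
    qed
    then have "v = 0\<^sub>v N" using indep v(1) by (intro eq_vecI) auto
    then show False using v(2) by simp
  qed
  from det_non_zero_imp_unit[OF M_carrier this]
  obtain M' where M': "M' \<in> carrier_mat N N" "M * M' = 1\<^sub>m N"
    unfolding Units_def ring_mat_def by auto
  show ?thesis
  proof (intro exI[of _ "\<lambda>b. M' $$ (b, m)"] allI impI)
    fix n assume n: "n < N"
    have "(M * M') $$ (n, m) = (if n = m then 1 else 0)" using M'(2) n m by simp
    then show "(\<Sum>b<N. M' $$ (b, m) * B b n) = (if n = m then 1 else 0)"
      using n m M'(1) unfolding M_def by (simp add: scalar_prod_def lessThan_atLeast0 mult.commute)
  qed
qed

section \<open>The metric \<open>g\<^sub>F\<close> and its Christoffel symbols\<close>

lemma dimF_eq: "dimF k = 3 * k + 2"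
  by (simp add: dimF_def)

lemma sum_coords:
  fixes h :: "nat \<Rightarrow> 'a::comm_monoid_add"
  shows "(\<Sum>n<3*k+2. h n) =
    h 0 + (\<Sum>i\<in>{1..k}. h i) + (\<Sum>m\<in>{..k}. h (k+1+m)) + (\<Sum>i\<in>{1..k}. h (2*k+1+i))"
proof -
  have "(\<Sum>n<3*k+2. h n) = sum h {0..<k+1} + sum h {k+1..<2*k+2} + sum h {2*k+2..<3*k+2}"
    by (simp only: sum.atLeastLessThan_concat lessThan_atLeast0)
  moreover have "sum h {0..<k+1} = h 0 + (\<Sum>i\<in>{1..k}. h i)"
    by (simp add: atLeast0LessThan sum.atLeast1_atMost_eq lessThan_Suc_atMost sum.atMost_shift)
  moreover have "sum h {k+1..<2*k+2} = (\<Sum>m\<in>{..k}. h (k+1+m))"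
    using sum.shift_bounds_nat_ivl[of h 0 "k+1" "k+1"]
    by (simp add: atLeast0LessThan add.commute mult_2 lessThan_Suc_atMost)
  moreover have "sum h {2*k+2..<3*k+2} = (\<Sum>i\<in>{1..k}. h (2*k+1+i))"
    using sum.shift_bounds_nat_ivl[of h 0 "2*k+2" "k"]
    by (simp add: atLeast0LessThan add.commute sum.atLeast1_atMost_eq)
  ultimately show ?thesis by simp
qed

lemma coord_cases:
  fixes n k :: nat
  assumes "n < 3*k+2"
  obtains "n = 0"
    | i where "1 \<le> i" "i \<le> k" "n = i"
    | m where "m \<le> k" "n = k+1+m"
    | i where "1 \<le> i" "i \<le> k" "n = 2*k+1+i"
proof -
  consider "n = 0" | "1 \<le> n \<and> n \<le> k" | "k+1 \<le> n \<and> n \<le> 2*k+1" | "2*k+2 \<le> n" by linarith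
  then show ?thesis
  proof cases
    case 3 then show ?thesis using that(3)[of "n-(k+1)"] by auto
  next
    case 4 then show ?thesis using that(4)[of "n-(2*k+1)"] assms by auto
  qed (use that in auto)
qed

text \<open>The inverse metric: in the blocks (u, v, s) the metric is
  [[A, I, 0], [I, 0, 0], [0, 0, diag eps]], with inverse [[0, I, 0], [I, -A, 0], [0, 0, diag eps]].\<close>

definition gF_inv :: "nat \<Rightarrow> (nat \<Rightarrow> real \<Rightarrow> real) \<Rightarrow> (nat \<Rightarrow> real) \<Rightarrow> (nat \<Rightarrow> real) \<Rightarrow> nat \<Rightarrow> nat \<Rightarrow> real" where
  "gF_inv k F eps x c d =
    (if c \<le> k \<and> d = k+1+c then 1
     else if d \<le> k \<and> c = k+1+d then 1
     else if k+1 \<le> c \<and> c \<le> 2*k+1 \<and> k+1 \<le> d \<and> d \<le> 2*k+1 then - gF k F eps x (c-(k+1)) (d-(k+1))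
     else if c = d \<and> 2*k+2 \<le> c \<and> c \<le> 3*k+1 then eps (c-(2*k+1))
     else 0)"

locale MF =
  fixes k :: nat and F :: "nat \<Rightarrow> real \<Rightarrow> real" and eps :: "nat \<Rightarrow> real"
  assumes k_ge_1: "k \<ge> 1"
    and eps_sign: "\<forall>j\<in>{1..k}. eps j = 1 \<or> eps j = -1"
    and F_smooth: "\<forall>j\<in>{1..k}. smooth_real (F j)"
begin

lemma eps_sq: "1 \<le> i \<Longrightarrow> i \<le> k \<Longrightarrow> eps i * eps i = 1"
proof -
  assume "1 \<le> i" "i \<le> k"
  then have "eps i = 1 \<or> eps i = -1" using eps_sign by auto
  then show ?thesis by auto
qed

lemma gF_sym: "gF k F eps x a b = gF k F eps x b a"
  unfolding gF_def by auto

lemma gF_inv_sym: "gF_inv k F eps x a b = gF_inv k F eps x b a"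
  unfolding gF_inv_def using gF_sym by auto

lemma gF_vals:
  "gF k F eps x 0 0 = 0"
  "1 \<le> i \<Longrightarrow> i \<le> k \<Longrightarrow> gF k F eps x 0 i = 2 * F i (x i) * x (Suc (2*k+i))"
  "1 \<le> i \<Longrightarrow> i \<le> k \<Longrightarrow> gF k F eps x i 0 = 2 * F i (x i) * x (Suc (2*k+i))"
  "1 \<le> i \<Longrightarrow> i \<le> k \<Longrightarrow> 1 \<le> j \<Longrightarrow> j \<le> k \<Longrightarrow>
     gF k F eps x i j = (if i = j then - 2 * x 0 * x (Suc (2*k+i)) else 0)"
  "a \<le> k \<Longrightarrow> m \<le> k \<Longrightarrow> gF k F eps x a (Suc (k+m)) = (if a = m then 1 else 0)"
  "a \<le> k \<Longrightarrow> m \<le> k \<Longrightarrow> gF k F eps x (Suc (k+m)) a = (if a = m then 1 else 0)"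
  "a \<le> k \<Longrightarrow> 1 \<le> i \<Longrightarrow> gF k F eps x a (Suc (2*k+i)) = 0"
  "a \<le> k \<Longrightarrow> 1 \<le> i \<Longrightarrow> gF k F eps x (Suc (2*k+i)) a = 0"
  "m \<le> k \<Longrightarrow> m' \<le> k \<Longrightarrow> gF k F eps x (Suc (k+m)) (Suc (k+m')) = 0"
  "m \<le> k \<Longrightarrow> 1 \<le> i \<Longrightarrow> gF k F eps x (Suc (k+m)) (Suc (2*k+i)) = 0"
  "m \<le> k \<Longrightarrow> 1 \<le> i \<Longrightarrow> gF k F eps x (Suc (2*k+i)) (Suc (k+m)) = 0"
  "1 \<le> i \<Longrightarrow> i \<le> k \<Longrightarrow> 1 \<le> j \<Longrightarrow> j \<le> k \<Longrightarrow>
     gF k F eps x (Suc (2*k+i)) (Suc (2*k+j)) = (if i = j then eps i else 0)"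
  by (simp_all add: gF_def)

lemma gF_inv_vals:
  "a \<le> k \<Longrightarrow> b \<le> k \<Longrightarrow> gF_inv k F eps x a b = 0"
  "a \<le> k \<Longrightarrow> m \<le> k \<Longrightarrow> gF_inv k F eps x a (Suc (k+m)) = (if a = m then 1 else 0)"
  "a \<le> k \<Longrightarrow> m \<le> k \<Longrightarrow> gF_inv k F eps x (Suc (k+m)) a = (if a = m then 1 else 0)"
  "a \<le> k \<Longrightarrow> 1 \<le> i \<Longrightarrow> gF_inv k F eps x a (Suc (2*k+i)) = 0"
  "a \<le> k \<Longrightarrow> 1 \<le> i \<Longrightarrow> gF_inv k F eps x (Suc (2*k+i)) a = 0"
  "m \<le> k \<Longrightarrow> m' \<le> k \<Longrightarrow> gF_inv k F eps x (Suc (k+m)) (Suc (k+m')) = - gF k F eps x m m'"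
  "m \<le> k \<Longrightarrow> 1 \<le> i \<Longrightarrow> gF_inv k F eps x (Suc (k+m)) (Suc (2*k+i)) = 0"
  "m \<le> k \<Longrightarrow> 1 \<le> i \<Longrightarrow> gF_inv k F eps x (Suc (2*k+i)) (Suc (k+m)) = 0"
  "1 \<le> i \<Longrightarrow> i \<le> k \<Longrightarrow> 1 \<le> j \<Longrightarrow> j \<le> k \<Longrightarrow>
     gF_inv k F eps x (Suc (2*k+i)) (Suc (2*k+j)) = (if i = j then eps i else 0)"
  by (simp_all add: gF_inv_def)

lemma gF_mult_gF_inv:
  assumes a: "a < 3*k+2" and b: "b < 3*k+2"
  shows "(\<Sum>c<3*k+2. gF k F eps x a c * gF_inv k F eps x c b) = (if a = b then 1 else 0)"
  unfolding sum_coords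
  by (cases rule: coord_cases[OF a]; cases rule: coord_cases[OF b];
      simp add: gF_vals gF_inv_vals if_zero_simps eps_sq)

lemma ginv_gF:
  assumes c: "c < dimF k" and b: "b < dimF k"
  shows "ginv (dimF k) (gF k F eps) x c b = gF_inv k F eps x c b"
proof -
  let ?N = "3*k+2"
  let ?g = "gF k F eps x" and ?G = "gF_inv k F eps x"
  define is_inv where "is_inv h \<longleftrightarrow>
    (\<forall>a<?N. \<forall>b<?N. (\<Sum>c<?N. ?g a c * h c b) = (if a = b then (1::real) else 0))" for h
  have "is_inv ?G" unfolding is_inv_def using gF_mult_gF_inv by blast
  then have "is_inv (ginv (dimF k) (gF k F eps) x)"
    unfolding ginv_def is_inv_def dimF_eq by (rule someI[where P = is_inv, unfolded is_inv_def])
  then obtain h where h_def: "h = ginv (dimF k) (gF k F eps) x" and inv_h: "is_inv h" by blast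
  have cN: "c < ?N" and bN: "b < ?N" using c b by (auto simp: dimF_eq)
  have G_mult_g: "(\<Sum>d<?N. ?G c d * ?g d a) = (if c = a then 1 else 0)" if "a < ?N" for a
  proof -
    have "(\<Sum>d<?N. ?G c d * ?g d a) = (\<Sum>d<?N. ?g a d * ?G d c)"
      by (rule sum.cong) (auto simp: mult.commute gF_sym[of x _ a] gF_inv_sym[of x c])
    then show ?thesis using gF_mult_gF_inv[OF that cN] by auto
  qed
  \<comment> \<open>\<open>ginv\<close> is just some right inverse, but \<open>G\<close> is also a left inverse, so they agree\<close>
  have "h c b = (\<Sum>a<?N. (if c = a then 1 else 0) * h a b)"
    using cN by (simp add: if_zero_simps)
  also have "\<dots> = (\<Sum>a<?N. (\<Sum>d<?N. ?G c d * ?g d a) * h a b)"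
    by (rule sum.cong[OF refl], subst G_mult_g) auto
  also have "\<dots> = (\<Sum>d<?N. ?G c d * (\<Sum>a<?N. ?g d a * h a b))"
    unfolding sum_distrib_left sum_distrib_right mult.assoc by (rule sum.swap)
  also have "\<dots> = (\<Sum>d<?N. ?G c d * (if d = b then 1 else 0))"
    using inv_h bN unfolding is_inv_def by (intro sum.cong refl) auto
  also have "\<dots> = ?G c b"
    using bN by (simp add: if_zero_simps)
  finally show ?thesis unfolding h_def .
qed

lemma F_differentiable: "1 \<le> i \<Longrightarrow> i \<le> k \<Longrightarrow> F i differentiable (at u)"
  using F_smooth smooth_real_differentiable[of "F i" 0] by auto

lemma deriv_F_differentiable: "1 \<le> i \<Longrightarrow> i \<le> k \<Longrightarrow> deriv (F i) differentiable (at u)"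
  using F_smooth smooth_real_differentiable[of "F i" 1] by auto

definition dgF :: "(nat \<Rightarrow> real) \<Rightarrow> nat \<Rightarrow> nat \<Rightarrow> nat \<Rightarrow> real" where
  "dgF y a b d =
    (if b = 0 \<and> 1 \<le> d \<and> d \<le> k then
       (if a = d then 2 * deriv (F d) (y d) * y (Suc (2*k+d))
        else if a = Suc (2*k+d) then 2 * F d (y d) else 0)
     else if d = 0 \<and> 1 \<le> b \<and> b \<le> k then
       (if a = b then 2 * deriv (F b) (y b) * y (Suc (2*k+b))
        else if a = Suc (2*k+b) then 2 * F b (y b) else 0)
     else if b = d \<and> 1 \<le> b \<and> b \<le> k then
       (if a = 0 then -2 * y (Suc (2*k+b)) else if a = Suc (2*k+b) then -2 * y 0 else 0)
     else 0)"

lemma pd_gF: "pd a (\<lambda>z. gF k F eps z b d) y = dgF y a b d"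
proof -
  have pd_g_u0ui: "pd a (\<lambda>z. 2 * F i (z i) * z j) y =
      2 * (if i = a then deriv (F i) (y i) else 0) * y j + 2 * F i (y i) * (if j = a then 1 else 0)"
    if "1 \<le> i" "i \<le> k" for i j a
    by (rule pd_eqI, rule has_pd_eq_rhs[OF has_pd_mult[OF has_pd_mult[OF has_pd_const
          has_pd_comp_coord[OF F_differentiable[OF that]]] has_pd_coord]]) auto
  have pd_g_uiui: "pd a (\<lambda>z. - (2 * z 0 * z j)) y =
      -2 * (if 0 = a then 1 else 0) * y j + -2 * y 0 * (if j = a then 1 else 0)" for j a
    by (rule pd_eqI, rule has_pd_eq_rhs[OF has_pd_minus[OF has_pd_mult[OF has_pd_mult[OF has_pd_const
          has_pd_coord] has_pd_coord]]]) auto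
  show ?thesis
    unfolding gF_def by (simp only: pd_if) (auto simp: pd_g_u0ui pd_g_uiui pd_const dgF_def)
qed

text \<open>\<open>chrF y c a b\<close> is \<open>\<Gamma>\<^sup>c\<^sub>a\<^sub>b\<close>; the upper index only takes the values \<open>v\<^sub>0 = k + 1\<close>,
  \<open>v\<^sub>i\<close> and \<open>s\<^sub>i\<close>, since the Christoffel symbols with an upper \<open>u\<close>-index vanish.\<close>

definition chrF :: "(nat \<Rightarrow> real) \<Rightarrow> nat \<Rightarrow> nat \<Rightarrow> nat \<Rightarrow> real" where
  "chrF y c a b =
    (if c = Suc k then
       (if 1 \<le> a \<and> a \<le> k \<and> b = a then (2 * deriv (F a) (y a) + 1) * y (Suc (2*k+a))
        else if 1 \<le> a \<and> a \<le> k \<and> b = Suc (2*k+a) then F a (y a)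
        else if 1 \<le> b \<and> b \<le> k \<and> a = Suc (2*k+b) then F b (y b) else 0)
     else if Suc (Suc k) \<le> c \<and> c \<le> Suc (2*k) then
       (if (a = 0 \<and> b = c - Suc k) \<or> (a = c - Suc k \<and> b = 0) then - y (Suc (2*k+(c - Suc k)))
        else if (a = c - Suc k \<and> b = Suc (2*k+(c - Suc k))) \<or> (a = Suc (2*k+(c - Suc k)) \<and> b = c - Suc k)
          then - y 0
        else if (a = 0 \<and> b = Suc (2*k+(c - Suc k))) \<or> (a = Suc (2*k+(c - Suc k)) \<and> b = 0)
          then F (c - Suc k) (y (c - Suc k))
        else 0)
     else if Suc (Suc (2*k)) \<le> c \<and> c \<le> Suc (3*k) then
       (if a = c - Suc (2*k) \<and> b = c - Suc (2*k) then eps (c - Suc (2*k)) * y 0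
        else if (a = 0 \<and> b = c - Suc (2*k)) \<or> (a = c - Suc (2*k) \<and> b = 0)
          then - (eps (c - Suc (2*k)) * F (c - Suc (2*k)) (y (c - Suc (2*k))))
        else 0)
     else 0)"

lemma chr_gF:
  assumes c: "c < dimF k" and a: "a < dimF k" and b: "b < dimF k"
  shows "chr (dimF k) (gF k F eps) c a b y = chrF y c a b"
proof -
  have "chr (dimF k) (gF k F eps) c a b y =
      1/2 * (\<Sum>d<dimF k. gF_inv k F eps y c d * (dgF y a b d + dgF y b a d - dgF y d a b))"
    unfolding chr_def pd_gF
    by (rule arg_cong[where f = "\<lambda>s. 1/2 * s"], rule sum.cong[OF refl]) (simp add: ginv_gF[OF c])
  also have "\<dots> = chrF y c a b"
    using c a b unfolding dimF_eq sum_coords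
    by (cases rule: coord_cases[OF c[unfolded dimF_eq]];
        cases rule: coord_cases[OF a[unfolded dimF_eq]];
        cases rule: coord_cases[OF b[unfolded dimF_eq]];
        simp add: gF_inv_vals if_zero_simps dgF_def chrF_def cong: if_cong;
        auto simp: algebra_simps intro!: sum.neutral)
  finally show ?thesis .
qed

end

section \<open>The curvature and its covariant derivatives\<close>

context MF
begin

lemma chrF_u: "f \<le> k \<Longrightarrow> chrF y f a b = 0"
  unfolding chrF_def by auto

lemma chrF_v0: "chrF y (Suc k) a b =
    (if 1 \<le> a \<and> a \<le> k \<and> b = a then (2 * deriv (F a) (y a) + 1) * y (Suc (2*k+a))
     else if 1 \<le> a \<and> a \<le> k \<and> b = Suc (2*k+a) then F a (y a)
     else if 1 \<le> b \<and> b \<le> k \<and> a = Suc (2*k+b) then F b (y b) else 0)"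
  unfolding chrF_def by simp

lemma chrF_v: "1 \<le> i \<Longrightarrow> i \<le> k \<Longrightarrow> chrF y (Suc (k+i)) a b =
    (if (a = 0 \<and> b = i) \<or> (a = i \<and> b = 0) then - y (Suc (2*k+i))
     else if (a = i \<and> b = Suc (2*k+i)) \<or> (a = Suc (2*k+i) \<and> b = i) then - y 0
     else if (a = 0 \<and> b = Suc (2*k+i)) \<or> (a = Suc (2*k+i) \<and> b = 0) then F i (y i)
     else 0)"
  unfolding chrF_def by simp

lemma chrF_s: "1 \<le> i \<Longrightarrow> i \<le> k \<Longrightarrow> chrF y (Suc (2*k+i)) a b =
    (if a = i \<and> b = i then eps i * y 0
     else if (a = 0 \<and> b = i) \<or> (a = i \<and> b = 0) then - (eps i * F i (y i))
     else 0)"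
  unfolding chrF_def by simp

lemma pd_chrF_terms:
  assumes "1 \<le> i" "i \<le> k"
  shows "pd x (\<lambda>z. (2 * deriv (F i) (z i) + 1) * z j) y =
      2 * (if i = x then deriv (deriv (F i)) (y i) else 0) * y j
      + (2 * deriv (F i) (y i) + 1) * (if j = x then 1 else 0)"
    and "pd x (\<lambda>z. F i (z i)) y = (if i = x then deriv (F i) (y i) else 0)"
    and "pd x (\<lambda>z. - (c * F i (z i))) y = - (c * (if i = x then deriv (F i) (y i) else 0))"
proof -
  note F' = has_pd_comp_coord[OF F_differentiable[OF assms]]
  show "pd x (\<lambda>z. (2 * deriv (F i) (z i) + 1) * z j) y =
      2 * (if i = x then deriv (deriv (F i)) (y i) else 0) * y j
      + (2 * deriv (F i) (y i) + 1) * (if j = x then 1 else 0)"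
    by (rule pd_eqI, rule has_pd_eq_rhs[OF has_pd_mult[OF has_pd_add[OF has_pd_mult[OF has_pd_const
          has_pd_comp_coord[OF deriv_F_differentiable[OF assms]]] has_pd_const] has_pd_coord]]) auto
  show "pd x (\<lambda>z. F i (z i)) y = (if i = x then deriv (F i) (y i) else 0)"
    by (rule pd_eqI[OF F'])
  show "pd x (\<lambda>z. - (c * F i (z i))) y = - (c * (if i = x then deriv (F i) (y i) else 0))"
    by (rule pd_eqI, rule has_pd_eq_rhs[OF has_pd_minus[OF has_pd_mult[OF has_pd_const F']]]) auto
qed

lemma pd_coord_terms:
  "pd x (\<lambda>z. - z j) y = - (if j = x then 1 else 0)"
  "pd x (\<lambda>z. c * z j) y = c * (if j = x then 1 else 0)"
  by (rule pd_eqI, rule has_pd_minus[OF has_pd_coord])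
     (rule pd_eqI, rule has_pd_eq_rhs[OF has_pd_mult[OF has_pd_const has_pd_coord]], simp)

lemmas pd_chrF_simps = pd_chrF_terms pd_coord_terms pd_const

lemma pd_chrF_v0: "pd x (\<lambda>z. chrF z (Suc k) a b) y =
    (if 1 \<le> a \<and> a \<le> k \<and> b = a then
       2 * (if a = x then deriv (deriv (F a)) (y a) else 0) * y (Suc (2*k+a))
       + (2 * deriv (F a) (y a) + 1) * (if Suc (2*k+a) = x then 1 else 0)
     else if 1 \<le> a \<and> a \<le> k \<and> b = Suc (2*k+a) then (if a = x then deriv (F a) (y a) else 0)
     else if 1 \<le> b \<and> b \<le> k \<and> a = Suc (2*k+b) then (if b = x then deriv (F b) (y b) else 0)
     else 0)"
  unfolding chrF_v0 pd_if by (simp add: pd_chrF_simps cong: if_cong)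

lemma pd_chrF_v: "1 \<le> i \<Longrightarrow> i \<le> k \<Longrightarrow> pd x (\<lambda>z. chrF z (Suc (k+i)) a b) y =
    (if (a = 0 \<and> b = i) \<or> (a = i \<and> b = 0) then - (if Suc (2*k+i) = x then 1 else 0)
     else if (a = i \<and> b = Suc (2*k+i)) \<or> (a = Suc (2*k+i) \<and> b = i) then - (if 0 = x then 1 else 0)
     else if (a = 0 \<and> b = Suc (2*k+i)) \<or> (a = Suc (2*k+i) \<and> b = 0)
       then (if i = x then deriv (F i) (y i) else 0)
     else 0)"
  unfolding chrF_v pd_if by (simp add: pd_chrF_simps cong: if_cong)

lemma pd_chrF_s: "1 \<le> i \<Longrightarrow> i \<le> k \<Longrightarrow> pd x (\<lambda>z. chrF z (Suc (2*k+i)) a b) y =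
    (if a = i \<and> b = i then eps i * (if 0 = x then 1 else 0)
     else if (a = 0 \<and> b = i) \<or> (a = i \<and> b = 0) then - (eps i * (if i = x then deriv (F i) (y i) else 0))
     else 0)"
  unfolding chrF_s pd_if by (simp add: pd_chrF_simps cong: if_cong)

text \<open>\<open>R_pattern i\<close> is the tensor \<open>(du\<^sub>0 \<and> du\<^sub>i) \<odot> (du\<^sub>i \<and> ds\<^sub>i)\<close> on its first four slots.\<close>

definition wedge_u0_ui :: "nat \<Rightarrow> nat \<Rightarrow> nat \<Rightarrow> real" where
  "wedge_u0_ui i a b = (if a = 0 \<and> b = i then 1 else if a = i \<and> b = 0 then -1 else 0)"

definition wedge_ui_si :: "nat \<Rightarrow> nat \<Rightarrow> nat \<Rightarrow> real" where
  "wedge_ui_si i a b =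
    (if a = i \<and> b = Suc (2*k+i) then 1 else if a = Suc (2*k+i) \<and> b = i then -1 else 0)"

definition R_pattern :: "nat \<Rightarrow> nat list \<Rightarrow> real" where
  "R_pattern i h = wedge_u0_ui i (h!0) (h!1) * wedge_ui_si i (h!2) (h!3)
                 + wedge_ui_si i (h!0) (h!1) * wedge_u0_ui i (h!2) (h!3)"

definition curv13 :: "(nat \<Rightarrow> real) \<Rightarrow> nat \<Rightarrow> nat \<Rightarrow> nat \<Rightarrow> nat \<Rightarrow> real" where
  "curv13 y f a b c = pd a (\<lambda>z. chrF z f b c) y - pd b (\<lambda>z. chrF z f a c) y
     + (\<Sum>e<dimF k. chrF y e b c * chrF y f a e - chrF y e a c * chrF y f b e)"

lemma curv_gF_curv13:
  assumes "a < dimF k" "b < dimF k" "c < dimF k" "d < dimF k"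
  shows "curv (dimF k) (gF k F eps) y [a,b,c,d] = (\<Sum>f<dimF k. gF k F eps y f d * curv13 y f a b c)"
proof -
  have chr_fun: "chr (dimF k) (gF k F eps) f' a' b' = (\<lambda>z. chrF z f' a' b')"
    if "f' < dimF k" "a' < dimF k" "b' < dimF k" for f' a' b'
    using chr_gF that by auto
  have chr_sum: "(\<Sum>e<dimF k. chr (dimF k) (gF k F eps) e b c y * chr (dimF k) (gF k F eps) f a e y -
        chr (dimF k) (gF k F eps) e a c y * chr (dimF k) (gF k F eps) f b e y) =
      (\<Sum>e<dimF k. chrF y e b c * chrF y f a e - chrF y e a c * chrF y f b e)" if "f < dimF k" for f
    by (rule sum.cong[OF refl]) (simp add: chr_fun assms that)
  show ?thesis
    unfolding curv_def curv13_def list.case using assms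
    by (intro sum.cong refl) (simp add: chr_fun chr_sum)
qed

lemma chrF_quadratic_v:
  assumes e: "e < dimF k" and m: "m \<le> k" and nonu: "a > k \<or> b > k \<or> c > k"
  shows "chrF y e b c * chrF y (Suc (k+m)) a e = 0"
proof (cases rule: coord_cases[OF e[unfolded dimF_eq]])
  case (3 m')
  then show ?thesis using m by (cases "m = 0") (simp_all add: chrF_v0 chrF_v)
next
  case (4 j)
  then show ?thesis using m nonu by (cases "m = 0") (auto simp add: chrF_v0 chrF_v chrF_s)
qed (simp_all add: chrF_u)

lemma chrF_quadratic_s:
  assumes "1 \<le> i" "i \<le> k"
  shows "chrF y e b c * chrF y (Suc (2*k+i)) a e = 0"
  using assms by (cases "e \<le> k") (simp_all add: chrF_u chrF_s)

lemma curv13_u: "f \<le> k \<Longrightarrow> curv13 y f a b c = 0"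
  unfolding curv13_def by (simp add: chrF_u pd_const)

lemma curv13_s: "1 \<le> i \<Longrightarrow> i \<le> k \<Longrightarrow> curv13 y (Suc (2*k+i)) a b c =
    pd a (\<lambda>z. chrF z (Suc (2*k+i)) b c) y - pd b (\<lambda>z. chrF z (Suc (2*k+i)) a c) y"
  unfolding curv13_def by (simp add: chrF_quadratic_s)

lemma curv13_v: "m \<le> k \<Longrightarrow> a > k \<or> b > k \<or> c > k \<Longrightarrow> curv13 y (Suc (k+m)) a b c =
    pd a (\<lambda>z. chrF z (Suc (k+m)) b c) y - pd b (\<lambda>z. chrF z (Suc (k+m)) a c) y"
proof -
  assume m: "m \<le> k" and nonu: "a > k \<or> b > k \<or> c > k"
  have "chrF y e b c * chrF y (Suc (k+m)) a e - chrF y e a c * chrF y (Suc (k+m)) b e = 0"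
    if "e < dimF k" for e
    using chrF_quadratic_v[OF that m nonu, of y] chrF_quadratic_v[OF that m, of b a c y] nonu by auto
  then show ?thesis unfolding curv13_def by (simp add: sum.neutral)
qed

lemma curv_gF_nonu:
  assumes a: "a < dimF k" and b: "b < dimF k" and c: "c < dimF k" and d: "d < dimF k"
    and nonu: "a > k \<or> b > k \<or> c > k \<or> d > k"
  shows "curv (dimF k) (gF k F eps) y [a,b,c,d] = (\<Sum>i\<in>{1..k}. R_pattern i [a,b,c,d] * (1 + deriv (F i) (y i)))"
  unfolding curv_gF_curv13[OF a b c d] unfolding dimF_eq sum_coords
  using nonu
  by (cases rule: coord_cases[OF a[unfolded dimF_eq]]; cases rule: coord_cases[OF b[unfolded dimF_eq]];
      cases rule: coord_cases[OF c[unfolded dimF_eq]]; cases rule: coord_cases[OF d[unfolded dimF_eq]];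
      simp add: gF_vals curv13_u curv13_s curv13_v pd_chrF_v0 pd_chrF_v pd_chrF_s if_zero_simps
        R_pattern_def wedge_u0_ui_def wedge_ui_si_def eps_sq cong: if_cong;
      auto simp: algebra_simps eps_sq intro!: sum.neutral)

definition curv_coef :: "nat \<Rightarrow> nat \<Rightarrow> real \<Rightarrow> real" where
  "curv_coef l i u = (if l = 0 then 1 + deriv (F i) u else (deriv ^^ Suc l) (F i) u)"

definition nabla_curv_F :: "nat \<Rightarrow> (nat \<Rightarrow> real) \<Rightarrow> nat list \<Rightarrow> real" where
  "nabla_curv_F l y is =
    (\<Sum>i\<in>{1..k}. R_pattern i is * (if set (drop 4 is) \<subseteq> {i} then curv_coef l i (y i) else 0))"

lemma has_pd_curv_coef:
  assumes "1 \<le> i" "i \<le> k"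
  shows "has_pd a (\<lambda>z. curv_coef l i (z i)) y (if i = a then curv_coef (Suc l) i (y i) else 0)"
proof -
  have curv_coef_eq: "(\<lambda>z. curv_coef l i (z i)) = (\<lambda>z. (if l = 0 then 1 else 0) + (deriv ^^ Suc l) (F i) (z i))"
    by (simp add: curv_coef_def fun_eq_iff)
  have "(deriv ^^ Suc l) (F i) differentiable (at (y i))"
    by (rule smooth_real_differentiable) (use F_smooth assms in auto)
  from has_pd_add[OF has_pd_const has_pd_comp_coord[where y = y and j = i, OF this]] show ?thesis
    unfolding curv_coef_eq by (rule has_pd_eq_rhs) (simp add: curv_coef_def)
qed

lemma R_pattern_append:
  assumes "4 \<le> length js"
  shows "R_pattern i (js @ xs) = R_pattern i js"
proof -
  have "(js @ xs) ! n = js ! n" if "n < 4" for n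
    using assms that by (simp add: nth_append)
  then show ?thesis unfolding R_pattern_def by simp
qed

lemma pd_nabla_curv_F:
  assumes js: "4 \<le> length js"
  shows "pd a (\<lambda>z. nabla_curv_F l z js) y = nabla_curv_F (Suc l) y (js @ [a])"
proof -
  let ?C = "\<lambda>i. set (drop 4 js) \<subseteq> {i}"
  have "has_pd a (\<lambda>z. nabla_curv_F l z js) y
     (\<Sum>i\<in>{1..k}. R_pattern i js * (if ?C i then (if i = a then curv_coef (Suc l) i (y i) else 0) else 0))"
    unfolding nabla_curv_F_def
  proof (rule has_pd_sum)
    fix i assume "i \<in> {1..k}"
    then have i: "1 \<le> i" "i \<le> k" by auto
    show "has_pd a (\<lambda>z. R_pattern i js * (if ?C i then curv_coef l i (z i) else 0)) y
            (R_pattern i js * (if ?C i then (if i = a then curv_coef (Suc l) i (y i) else 0) else 0))"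
    proof (cases "?C i")
      case True
      then show ?thesis
        using has_pd_mult[OF has_pd_const has_pd_curv_coef[OF i], of a "R_pattern i js" l y] by simp
    next
      case False
      then show ?thesis using has_pd_const[of a 0 y] by simp
    qed
  qed simp
  then have "pd a (\<lambda>z. nabla_curv_F l z js) y =
      (\<Sum>i\<in>{1..k}. R_pattern i js * (if ?C i then (if i = a then curv_coef (Suc l) i (y i) else 0) else 0))"
    by (rule pd_eqI)
  also have "\<dots> = nabla_curv_F (Suc l) y (js @ [a])"
    unfolding nabla_curv_F_def using js by (auto simp: R_pattern_append intro!: sum.cong)
  finally show ?thesis .
qed

lemma R_pattern_nonzero_nonu:
  assumes "R_pattern i h \<noteq> 0" "1 \<le> i" "i \<le> k" "p < 4" "h ! p > k"
  shows "h ! p = Suc (2*k+i)"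
  using less_4_cases[OF assms(4)] assms unfolding R_pattern_def wedge_u0_ui_def wedge_ui_si_def
  by (auto split: if_splits)

lemma R_pattern_nonzero_single_nonu:
  assumes "R_pattern i h \<noteq> 0" "1 \<le> i" "i \<le> k" "p < 4" "q < 4" "h ! p > k" "h ! q > k"
  shows "p = q"
  using less_4_cases[OF assms(4)] less_4_cases[OF assms(5)] assms
  unfolding R_pattern_def wedge_u0_ui_def wedge_ui_si_def
  by (auto split: if_splits)

text \<open>The Christoffel correction terms of the covariant derivative vanish: replacing slot \<open>p\<close> by
  an index \<open>c > k\<close> leaves a non-\<open>u\<close> index among the first four slots, which \<open>R_pattern\<close> allows only
  once, so \<open>c = s\<^sub>i\<close> sits in the slot \<open>q\<close>; but \<open>\<Gamma>\<^sup>c\<^sub>a\<^sub>b\<close> with \<open>c = s\<^sub>i\<close> vanishes when \<open>b\<close> is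
  not a \<open>u\<close>-index.\<close>

lemma chrF_correction_zero:
  assumes js: "4 \<le> length js" and q: "q < 4" "js ! q > k" and p: "p < length js"
  shows "chrF y c a (js ! p) * nabla_curv_F l y (js[p := c]) = 0"
proof (cases "c \<le> k")
  case True
  then show ?thesis by (simp add: chrF_u)
next
  case c: False
  let ?h = "js[p := c]"
  have "chrF y c a (js ! p) * (R_pattern i ?h * (if set (drop 4 ?h) \<subseteq> {i} then curv_coef l i (y i) else 0)) = 0"
    if i: "1 \<le> i" "i \<le> k" for i
  proof (cases "p < 4")
    case False
    then have "drop 4 ?h ! (p - 4) = c" "p - 4 < length (drop 4 ?h)" using p by auto
    then have "c \<in> set (drop 4 ?h)" by (metis nth_mem)
    then show ?thesis using c i by auto
  next
    case True
    show ?thesis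
    proof (rule ccontr)
      assume "\<not> ?thesis"
      then have E: "R_pattern i ?h \<noteq> 0" and chr_nz: "chrF y c a (js ! p) \<noteq> 0" by auto
      have "c = Suc (2*k+i)" using R_pattern_nonzero_nonu[OF E i True] c p by simp
      moreover have "q = p"
        using R_pattern_nonzero_single_nonu[OF E i q(1) True] q c p by (cases "q = p") auto
      ultimately show False using chr_nz q i by (auto simp: chrF_s)
    qed
  qed
  then show ?thesis unfolding nabla_curv_F_def sum_distrib_left by (intro sum.neutral) auto
qed

lemma cov_nabla_curv_F_step:
  assumes T: "\<And>z xs q'. length xs = 4 + l \<Longrightarrow> set xs \<subseteq> {..<dimF k} \<Longrightarrow> q' < 4 \<Longrightarrow> xs ! q' > k \<Longrightarrow>
      T z xs = nabla_curv_F l z xs"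
    and len: "length is = 4 + Suc l" and bounded: "set is \<subseteq> {..<dimF k}" and q: "q < 4" "is ! q > k"
  shows "cov (dimF k) (gF k F eps) T y is = nabla_curv_F (Suc l) y is"
proof -
  obtain js a where is_snoc: "is = js @ [a]" using len by (cases "is" rule: rev_exhaust) auto
  have js: "length js = 4 + l" "set js \<subseteq> {..<dimF k}" and a: "a < dimF k"
    using len bounded is_snoc by auto
  have q_js: "js ! q > k" using q len is_snoc by (simp add: nth_append)
  have correction: "chr (dimF k) (gF k F eps) c a (js ! p) y * T y (js[p := c]) = 0"
    if p: "p < length js" and c: "c < dimF k" for p c
  proof -
    have jp: "js ! p < dimF k" using js(2) p nth_mem by blast
    show ?thesis
    proof (cases "c \<le> k")
      case True
      then show ?thesis by (simp add: chr_gF[OF c a jp] chrF_u)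
    next
      case False
      have "js[p := c] ! q > k" using q_js False p by (cases "p = q") auto
      then have "T y (js[p := c]) = nabla_curv_F l y (js[p := c])"
        using T[of "js[p := c]" q y] js c q(1) by (auto dest: set_update_subset_insert[THEN subsetD])
      then show ?thesis
        using chrF_correction_zero[of js q p y c a l] js q_js p q(1) by (simp add: chr_gF[OF c a jp])
    qed
  qed
  have "(\<Sum>p<length js. \<Sum>c<dimF k. chr (dimF k) (gF k F eps) c a (js ! p) y * T y (js[p := c])) = 0"
    using correction by (intro sum.neutral ballI) auto
  then have "cov (dimF k) (gF k F eps) T y is = pd a (\<lambda>z. T z js) y"
    by (simp add: is_snoc cov_snoc)
  also have "\<dots> = pd a (\<lambda>z. nabla_curv_F l z js) y"
    using T[OF js q(1) q_js] by simp
  also have "\<dots> = nabla_curv_F (Suc l) y is"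
    using pd_nabla_curv_F[of js a l y] js is_snoc by simp
  finally show ?thesis .
qed

lemma cov_iter_curv_gF:
  assumes "length is = 4 + l" "set is \<subseteq> {..<dimF k}" "q < 4" "is ! q > k"
  shows "(cov (dimF k) (gF k F eps) ^^ l) (curv (dimF k) (gF k F eps)) y is = nabla_curv_F l y is"
  using assms
proof (induction l arbitrary: y "is" q)
  case 0
  obtain a b c d where abcd: "is = [a, b, c, d]"
    using 0(1) by (auto simp: length_Suc_conv numeral_eq_Suc)
  have "a > k \<or> b > k \<or> c > k \<or> d > k"
    using less_4_cases[OF 0(3)] 0(4) abcd by (auto simp: numeral_2_eq_2 numeral_3_eq_3)
  then show ?case
    using curv_gF_nonu[of a b c d y] 0(2) abcd by (simp add: nabla_curv_F_def curv_coef_def)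
next
  case (Suc l)
  have "(cov (dimF k) (gF k F eps) ^^ l) (curv (dimF k) (gF k F eps)) z xs = nabla_curv_F l z xs"
    if "length xs = 4 + l" "set xs \<subseteq> {..<dimF k}" "q' < 4" "xs ! q' > k" for z xs q'
    using Suc.IH[OF that] .
  then show ?case
    using Suc.prems unfolding funpow.simps comp_apply by (rule cov_nabla_curv_F_step)
qed

definition wedge_u0_ui_eval :: "nat \<Rightarrow> (nat \<Rightarrow> real) \<Rightarrow> (nat \<Rightarrow> real) \<Rightarrow> real" where
  "wedge_u0_ui_eval i X Y = X 0 * Y i - X i * Y 0"

definition wedge_ui_si_eval :: "nat \<Rightarrow> (nat \<Rightarrow> real) \<Rightarrow> (nat \<Rightarrow> real) \<Rightarrow> real" where
  "wedge_ui_si_eval i X Y = X i * Y (Suc (2*k+i)) - X (Suc (2*k+i)) * Y i"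

lemma sum_wedge_u0_ui:
  assumes i: "1 \<le> i" "i \<le> k"
  shows "(\<Sum>a<dimF k. X a * (\<Sum>b<dimF k. Y b * (wedge_u0_ui i a b * Z))) = wedge_u0_ui_eval i X Y * Z"
proof -
  have N: "0 < dimF k" "i < dimF k" using i by (auto simp: dimF_eq)
  have inner: "(\<Sum>b<dimF k. Y b * (wedge_u0_ui i a b * Z)) =
      (if a = 0 then Y i * Z else if a = i then - (Y 0 * Z) else 0)" for a
  proof -
    have "(\<Sum>b<dimF k. Y b * (wedge_u0_ui i a b * Z)) =
        (\<Sum>b<dimF k. if b = (if a = 0 then i else 0)
           then (if a = 0 then Y i * Z else if a = i then - (Y 0 * Z) else 0) else 0)"
      by (rule sum.cong[OF refl]) (use i in \<open>auto simp: wedge_u0_ui_def\<close>)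
    then show ?thesis using N by simp
  qed
  have "(\<Sum>a<dimF k. X a * (\<Sum>b<dimF k. Y b * (wedge_u0_ui i a b * Z))) =
      (\<Sum>a<dimF k. if a = 0 then X 0 * (Y i * Z) else if a = i then X i * (- (Y 0 * Z)) else 0)"
    unfolding inner by (rule sum.cong[OF refl]) auto
  also have "\<dots> = X 0 * (Y i * Z) + X i * (- (Y 0 * Z))" using N i by (intro sum_two_points) auto
  finally show ?thesis unfolding wedge_u0_ui_eval_def by (simp add: algebra_simps)
qed

lemma sum_wedge_ui_si:
  assumes i: "1 \<le> i" "i \<le> k"
  shows "(\<Sum>a<dimF k. X a * (\<Sum>b<dimF k. Y b * (wedge_ui_si i a b * Z))) = wedge_ui_si_eval i X Y * Z"
proof -
  let ?s = "Suc (2*k+i)"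
  have N: "?s < dimF k" "i < dimF k" using i by (auto simp: dimF_eq)
  have inner: "(\<Sum>b<dimF k. Y b * (wedge_ui_si i a b * Z)) =
      (if a = i then Y ?s * Z else if a = ?s then - (Y i * Z) else 0)" for a
  proof -
    have "(\<Sum>b<dimF k. Y b * (wedge_ui_si i a b * Z)) =
        (\<Sum>b<dimF k. if b = (if a = i then ?s else i)
           then (if a = i then Y ?s * Z else if a = ?s then - (Y i * Z) else 0) else 0)"
      by (rule sum.cong[OF refl]) (use i in \<open>auto simp: wedge_ui_si_def\<close>)
    then show ?thesis using N by simp
  qed
  have "(\<Sum>a<dimF k. X a * (\<Sum>b<dimF k. Y b * (wedge_ui_si i a b * Z))) =
      (\<Sum>a<dimF k. if a = i then X i * (Y ?s * Z) else if a = ?s then X ?s * (- (Y i * Z)) else 0)"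
    unfolding inner by (rule sum.cong[OF refl]) auto
  also have "\<dots> = X i * (Y ?s * Z) + X ?s * (- (Y i * Z))" using N i by (intro sum_two_points) auto
  finally show ?thesis unfolding wedge_ui_si_eval_def by (simp add: algebra_simps)
qed

lemma teval_R_pattern:
  assumes i: "1 \<le> i" "i \<le> k"
  shows "teval (dimF k) (\<lambda>y is. R_pattern i is * (if set (drop 4 is) \<subseteq> {i} then 1 else 0)) y
      (X0 # X1 # X2 # X3 # Ys) =
    (wedge_u0_ui_eval i X0 X1 * wedge_ui_si_eval i X2 X3 + wedge_ui_si_eval i X0 X1 * wedge_u0_ui_eval i X2 X3)
      * (\<Prod>Y\<leftarrow>Ys. Y i)"
proof -
  let ?P = "\<Prod>Y\<leftarrow>Ys. Y i"
  let ?E = "\<lambda>a b c d. wedge_u0_ui i a b * wedge_ui_si i c d + wedge_ui_si i a b * wedge_u0_ui i c d"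
  have iN: "i < dimF k" using i by (simp add: dimF_eq)
  have tail: "teval (dimF k) (\<lambda>y is. R_pattern i (a # b # c # d # is) *
        (if set (drop 4 (a # b # c # d # is)) \<subseteq> {i} then 1 else 0)) y Ys = ?E a b c d * ?P" for a b c d
  proof -
    have "teval (dimF k) (\<lambda>y is. R_pattern i (a # b # c # d # is) *
          (if set (drop 4 (a # b # c # d # is)) \<subseteq> {i} then 1 else 0)) y Ys =
        teval (dimF k) (\<lambda>y is. ?E a b c d * (if \<forall>x\<in>set is. x = i then 1 else 0)) y Ys"
      by (rule teval_cong_field) (auto simp: R_pattern_def)
    also have "\<dots> = ?E a b c d * ?P"
      by (simp only: teval_scale_field teval_diagonal_indicator[OF iN])
    finally show ?thesis .
  qed
  have inner: "(\<Sum>c<dimF k. X2 c * (\<Sum>d<dimF k. X3 d * (?E a b c d * ?P))) =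
      wedge_u0_ui i a b * (wedge_ui_si_eval i X2 X3 * ?P) + wedge_ui_si i a b * (wedge_u0_ui_eval i X2 X3 * ?P)"
    for a b
  proof -
    have "(\<Sum>c<dimF k. X2 c * (\<Sum>d<dimF k. X3 d * (?E a b c d * ?P))) =
        (\<Sum>c<dimF k. X2 c * (\<Sum>d<dimF k. X3 d * (wedge_ui_si i c d * (wedge_u0_ui i a b * ?P)
           + wedge_u0_ui i c d * (wedge_ui_si i a b * ?P))))"
      by (simp add: algebra_simps)
    then show ?thesis
      unfolding sum_sum_add sum_wedge_u0_ui[OF i] sum_wedge_ui_si[OF i] by (simp add: algebra_simps)
  qed
  show ?thesis
    unfolding teval_Cons tail inner sum_sum_add sum_wedge_u0_ui[OF i] sum_wedge_ui_si[OF i]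
    by (simp add: algebra_simps)
qed

lemma teval_nabla_curv_F:
  "teval (dimF k) (nabla_curv_F l) y (X0 # X1 # X2 # X3 # Ys) =
   (\<Sum>i\<in>{1..k}. curv_coef l i (y i) *
      ((wedge_u0_ui_eval i X0 X1 * wedge_ui_si_eval i X2 X3 + wedge_ui_si_eval i X0 X1 * wedge_u0_ui_eval i X2 X3)
       * (\<Prod>Y\<leftarrow>Ys. Y i)))"
proof -
  have "teval (dimF k) (nabla_curv_F l) y (X0 # X1 # X2 # X3 # Ys) =
      teval (dimF k) (\<lambda>y' is. \<Sum>i\<in>{1..k}. curv_coef l i (y i) *
        (R_pattern i is * (if set (drop 4 is) \<subseteq> {i} then 1 else 0))) y (X0 # X1 # X2 # X3 # Ys)"
    by (rule teval_cong_field) (auto simp: nabla_curv_F_def intro!: sum.cong)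
  also have "\<dots> = (\<Sum>i\<in>{1..k}. curv_coef l i (y i) * teval (dimF k)
      (\<lambda>y is. R_pattern i is * (if set (drop 4 is) \<subseteq> {i} then 1 else 0)) y (X0 # X1 # X2 # X3 # Ys))"
    by (rule teval_sum_field) simp
  also have "\<dots> = (\<Sum>i\<in>{1..k}. curv_coef l i (y i) *
      ((wedge_u0_ui_eval i X0 X1 * wedge_ui_si_eval i X2 X3 + wedge_ui_si_eval i X0 X1 * wedge_u0_ui_eval i X2 X3)
       * (\<Prod>Y\<leftarrow>Ys. Y i)))"
    by (rule sum.cong[OF refl]) (simp add: teval_R_pattern)
  finally show ?thesis .
qed

text \<open>The complicated components of the curvature with four \<open>u\<close>-indices never matter, since
  every evaluation below has a vector without \<open>u\<close>-components in one of the first four slots.\<close>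

lemma teval_cov_iter_curv_gF:
  assumes len: "length Xs = 4 + l" and q: "q < 4" "\<And>m. m \<le> k \<Longrightarrow> (Xs ! q) m = 0"
  shows "teval (dimF k) ((cov (dimF k) (gF k F eps) ^^ l) (curv (dimF k) (gF k F eps))) y Xs =
    teval (dimF k) (nabla_curv_F l) y Xs"
proof (rule teval_cong_field)
  fix "is" assume len_is: "length is = length Xs" and bounded: "set is \<subseteq> {..<dimF k}"
    and nz: "(\<Prod>p<length Xs. (Xs ! p) (is ! p)) \<noteq> 0"
  have "(Xs ! q) (is ! q) \<noteq> 0" using nz q(1) len by (auto simp: prod_zero_iff)
  then have "is ! q > k" using q(2) not_le by blast
  then show "(cov (dimF k) (gF k F eps) ^^ l) (curv (dimF k) (gF k F eps)) y is = nabla_curv_F l y is"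
    using cov_iter_curv_gF[of "is" l q y] len_is len bounded q(1) by simp
qed

end

section \<open>Normalized bases\<close>

context MF
begin

lemma Rmodel_uuu:
  assumes "a \<le> k" "b \<le> k" "c \<le> k"
  shows "Rmodel k a b c d = (\<Sum>i\<in>{1..k}. (if a = 0 \<and> b = i \<and> c = i \<and> d = Suc (2*k+i) then 1 else 0)
                               - (if a = i \<and> b = 0 \<and> c = i \<and> d = Suc (2*k+i) then 1 else 0))"
  unfolding Rmodel_def Let_def by (rule sum.cong[OF refl]) (use assms in auto)

lemma Rmodel_third_u0: "a \<le> k \<Longrightarrow> b \<le> k \<Longrightarrow> Rmodel k a b 0 d = 0"
  by (simp add: Rmodel_uuu)

lemma Rmodel_first_u0_distinct: "b \<le> k \<Longrightarrow> c \<le> k \<Longrightarrow> b \<noteq> c \<Longrightarrow> Rmodel k 0 b c d = 0"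
  by (auto simp: Rmodel_uuu intro!: sum.neutral)

lemma Rmodel_vals:
  "Rmodel k b 1 1 (Suc (2*k+1)) = (if b = 0 then 1 else 0)"
  "1 \<le> j \<Longrightarrow> j \<le> k \<Longrightarrow> Rmodel k b 0 j (Suc (2*k+j)) = (if b = j then -1 else 0)"
  "1 \<le> j \<Longrightarrow> j \<le> k \<Longrightarrow> Rmodel k b j 0 j = (if b = Suc (2*k+j) then -1 else 0)"
proof -
  have "Rmodel k b 1 1 (Suc (2*k+1)) = (\<Sum>i\<in>{1..k}. if i = 1 then (if b = 0 then 1 else 0) else 0)"
    unfolding Rmodel_def Let_def by (rule sum.cong[OF refl]) auto
  then show "Rmodel k b 1 1 (Suc (2*k+1)) = (if b = 0 then 1 else 0)" using k_ge_1 by simp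
next
  assume j: "1 \<le> j" "j \<le> k"
  have "Rmodel k b 0 j (Suc (2*k+j)) = (\<Sum>i\<in>{1..k}. if i = j then (if b = j then -1 else 0) else 0)"
    unfolding Rmodel_def Let_def by (rule sum.cong[OF refl]) auto
  then show "Rmodel k b 0 j (Suc (2*k+j)) = (if b = j then -1 else 0)" using j by simp
  have "Rmodel k b j 0 j = (\<Sum>i\<in>{1..k}. if i = j then (if b = Suc (2*k+j) then -1 else 0) else 0)"
    unfolding Rmodel_def Let_def by (rule sum.cong[OF refl]) auto
  then show "Rmodel k b j 0 j = (if b = Suc (2*k+j) then -1 else 0)" using j by simp
qed

lemma gmodel_vals:
  "a \<le> k \<Longrightarrow> gmodel k eps a b = (if b = Suc (k+a) then 1 else 0)"
  "1 \<le> d \<Longrightarrow> d \<le> k \<Longrightarrow> gmodel k eps (Suc (2*k+d)) b = (if b = Suc (2*k+d) then eps d else 0)"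
  unfolding gmodel_def by auto

lemma gval_unit_v:
  assumes m: "m \<le> k"
  shows "gval (dimF k) (gF k F eps) y X (unit_vec (Suc (k+m))) = X m"
proof -
  have vN: "Suc (k+m) < dimF k" using m by (simp add: dimF_eq)
  have "gval (dimF k) (gF k F eps) y X (unit_vec (Suc (k+m))) = (\<Sum>a<dimF k. gF k F eps y a (Suc (k+m)) * X a)"
    unfolding gval_def unit_vec_def by (rule sum.cong[OF refl]) (simp add: if_zero_simps vN cong: if_cong)
  also have "\<dots> = X m" unfolding dimF_eq sum_coords using m by (simp add: gF_vals if_zero_simps)
  finally show ?thesis .
qed

definition beta_term :: "nat \<Rightarrow> (nat \<Rightarrow> real) \<Rightarrow> nat \<Rightarrow> real" where
  "beta_term l P i = curv_coef l i (P i) * curv_coef 0 i (P i) ^ (l - 1) / curv_coef 1 i (P i) ^ l"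

end

locale normalized_frame = MF +
  fixes P :: "nat \<Rightarrow> real" and B :: "nat \<Rightarrow> nat \<Rightarrow> real"
  assumes normalized: "normalized_basis k F eps P B"
    and coef_nonzero: "\<forall>j\<in>{1..k}. \<forall>u. deriv (F j) u + 1 \<noteq> 0"
begin

lemma B_independent: "\<forall>c. (\<forall>j<dimF k. (\<Sum>i<dimF k. c i * B i j) = 0) \<longrightarrow> (\<forall>i<dimF k. c i = 0)"
  using normalized unfolding normalized_basis_def by blast

lemma gval_B: "a < dimF k \<Longrightarrow> b < dimF k \<Longrightarrow> gval (dimF k) (gF k F eps) P (B a) (B b) = gmodel k eps a b"
  using normalized unfolding normalized_basis_def by blast

lemma curv_B: "a < dimF k \<Longrightarrow> b < dimF k \<Longrightarrow> c < dimF k \<Longrightarrow> d < dimF k \<Longrightarrow>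
    teval (dimF k) (curv (dimF k) (gF k F eps)) P [B a, B b, B c, B d] = Rmodel k a b c d"
  using normalized unfolding normalized_basis_def by blast

lemma curv_coef_0_nonzero: "1 \<le> i \<Longrightarrow> i \<le> k \<Longrightarrow> curv_coef 0 i u \<noteq> 0"
  using coef_nonzero unfolding curv_coef_def by (auto simp: add.commute)

lemma unit_vec_in_span:
  assumes "w < dimF k"
  obtains c where "\<forall>n<dimF k. (\<Sum>b<dimF k. c b * B b n) = unit_vec w n"
  using independent_imp_spans_coord[OF B_independent assms] unfolding unit_vec_def by blast

lemma Rmodel_coords_unit_v:
  assumes m: "m \<le> k" and c: "\<forall>n<dimF k. (\<Sum>b<dimF k. c b * B b n) = unit_vec (Suc (k+m)) n"
    and xyz: "x < dimF k" "y < dimF k" "z < dimF k"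
  shows "(\<Sum>b<dimF k. c b * Rmodel k b x y z) = 0"
proof -
  let ?v = "unit_vec (Suc (k+m))" and ?R = "curv (dimF k) (gF k F eps)"
  have "teval (dimF k) ?R P [?v, B x, B y, B z] = teval (dimF k) (nabla_curv_F 0) P [?v, B x, B y, B z]"
    using teval_cov_iter_curv_gF[of "[?v, B x, B y, B z]" 0 0 P] by (simp add: unit_vec_def)
  also have "\<dots> = 0"
    unfolding teval_nabla_curv_F
    by (rule sum.neutral) (use m in \<open>auto simp: wedge_u0_ui_eval_def wedge_ui_si_eval_def unit_vec_def\<close>)
  finally have "teval (dimF k) ?R P [?v, B x, B y, B z] = 0" .
  moreover have "teval (dimF k) ?R P [?v, B x, B y, B z] =
      teval (dimF k) ?R P ([B 0, B x, B y, B z][0 := (\<lambda>n. \<Sum>b<dimF k. c b * B b n)])"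
    by (rule teval_cong) (use c in \<open>auto simp: nth_Cons'\<close>)
  moreover have "\<dots> = (\<Sum>b<dimF k. c b * teval (dimF k) ?R P ([B 0, B x, B y, B z][0 := B b]))"
    by (rule teval_linear_slot) auto
  moreover have "\<dots> = (\<Sum>b<dimF k. c b * Rmodel k b x y z)"
    by (intro sum.cong refl) (simp add: curv_B xyz)
  ultimately show ?thesis by simp
qed

text \<open>Expanding the coordinate vector \<open>\<partial>\<^sub>v\<^sub>m\<close> in the basis: the curvature kills it, which
  rules out the \<open>U\<^sub>0, U\<^sub>j, S\<^sub>j\<close> directions, and the metric identifies the \<open>V\<^sub>a\<close>-coefficients.\<close>

lemma unit_v_coords:
  assumes m: "m \<le> k" and c: "\<forall>n<dimF k. (\<Sum>b<dimF k. c b * B b n) = unit_vec (Suc (k+m)) n"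
  shows "c 0 = 0" and "\<And>j. 1 \<le> j \<Longrightarrow> j \<le> k \<Longrightarrow> c j = 0"
    and "\<And>d. 1 \<le> d \<Longrightarrow> d \<le> k \<Longrightarrow> c (Suc (2*k+d)) = 0"
    and "\<And>a'. a' < dimF k \<Longrightarrow> B a' m = (\<Sum>b<dimF k. c b * gmodel k eps a' b)"
proof -
  have N: "0 < dimF k" "1 < dimF k" "Suc (2*k+1) < dimF k" using k_ge_1 by (auto simp: dimF_eq)
  have "0 = (\<Sum>b<dimF k. c b * Rmodel k b 1 1 (Suc (2*k+1)))"
    by (rule Rmodel_coords_unit_v[OF m c N(2,2,3), symmetric])
  also have "\<dots> = (\<Sum>b<dimF k. c b * (if b = 0 then 1 else 0))"
    by (rule sum.cong[OF refl]) (simp only: Rmodel_vals(1))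
  finally show "c 0 = 0" using N by (simp add: if_zero_simps)
next
  fix j assume j: "1 \<le> j" "j \<le> k"
  then have jN: "j < dimF k" "Suc (2*k+j) < dimF k" "0 < dimF k" by (auto simp: dimF_eq)
  have "0 = (\<Sum>b<dimF k. c b * Rmodel k b 0 j (Suc (2*k+j)))"
    by (rule Rmodel_coords_unit_v[OF m c jN(3,1,2), symmetric])
  also have "\<dots> = (\<Sum>b<dimF k. c b * (if b = j then -1 else 0))"
    by (rule sum.cong[OF refl]) (simp only: Rmodel_vals(2)[OF j])
  finally show "c j = 0" using jN by (simp add: if_zero_simps)
  have "0 = (\<Sum>b<dimF k. c b * Rmodel k b j 0 j)"
    by (rule Rmodel_coords_unit_v[OF m c jN(1,3,1), symmetric])
  also have "\<dots> = (\<Sum>b<dimF k. c b * (if b = Suc (2*k+j) then -1 else 0))"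
    by (rule sum.cong[OF refl]) (simp only: Rmodel_vals(3)[OF j])
  finally show "c (Suc (2*k+j)) = 0" using jN by (simp add: if_zero_simps)
next
  fix a' assume a': "a' < dimF k"
  have "B a' m = gval (dimF k) (gF k F eps) P (B a') (unit_vec (Suc (k+m)))"
    by (rule gval_unit_v[OF m, symmetric])
  also have "\<dots> = gval (dimF k) (gF k F eps) P (B a') (\<lambda>n. \<Sum>b<dimF k. c b * B b n)"
    by (rule gval_cong_right) (use c in auto)
  also have "\<dots> = (\<Sum>b<dimF k. c b * gval (dimF k) (gF k F eps) P (B a') (B b))"
    by (rule gval_linear_right) simp
  also have "\<dots> = (\<Sum>b<dimF k. c b * gmodel k eps a' b)"
    by (rule sum.cong[OF refl]) (simp add: gval_B a')
  finally show "B a' m = (\<Sum>b<dimF k. c b * gmodel k eps a' b)" .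
qed

lemma B_s_u_zero:
  assumes "1 \<le> d" "d \<le> k" "m \<le> k"
  shows "B (Suc (2*k+d)) m = 0"
proof -
  have N: "Suc (k+m) < dimF k" "Suc (2*k+d) < dimF k" using assms by (auto simp: dimF_eq)
  obtain c where c: "\<forall>n<dimF k. (\<Sum>b<dimF k. c b * B b n) = unit_vec (Suc (k+m)) n"
    using unit_vec_in_span[OF N(1)] .
  have "(\<Sum>b<dimF k. c b * gmodel k eps (Suc (2*k+d)) b) =
      (\<Sum>b<dimF k. c b * (if b = Suc (2*k+d) then eps d else 0))"
    by (rule sum.cong[OF refl]) (simp only: gmodel_vals(2)[OF assms(1,2)])
  then have "B (Suc (2*k+d)) m = c (Suc (2*k+d)) * eps d"
    using unit_v_coords(4)[OF assms(3) c N(2)] N(2) by (simp add: if_zero_simps)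
  then show ?thesis using unit_v_coords(3)[OF assms(3) c assms(1,2)] by simp
qed

lemma unit_v_expansion:
  assumes m: "m \<le> k" and n: "n < dimF k"
  shows "unit_vec (Suc (k+m)) n = (\<Sum>a\<in>{..k}. B a m * B (Suc (k+a)) n)"
proof -
  have vN: "Suc (k+m) < dimF k" using m by (simp add: dimF_eq)
  obtain c where c: "\<forall>n<dimF k. (\<Sum>b<dimF k. c b * B b n) = unit_vec (Suc (k+m)) n"
    using unit_vec_in_span[OF vN] .
  have cv: "c (Suc (k+a)) = B a m" if a: "a \<le> k" for a
  proof -
    have aN: "a < dimF k" "Suc (k+a) < dimF k" using a by (auto simp: dimF_eq)
    have "(\<Sum>b<dimF k. c b * gmodel k eps a b) = (\<Sum>b<dimF k. c b * (if b = Suc (k+a) then 1 else 0))"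
      by (rule sum.cong[OF refl]) (simp only: gmodel_vals(1)[OF a])
    then show ?thesis using unit_v_coords(4)[OF m c aN(1)] aN by (simp add: if_zero_simps)
  qed
  have "unit_vec (Suc (k+m)) n = (\<Sum>b<dimF k. c b * B b n)" using c n by simp
  also have "\<dots> = (\<Sum>a\<in>{..k}. B a m * B (Suc (k+a)) n)"
    unfolding dimF_eq sum_coords using unit_v_coords(1-3)[OF m c] cv by simp
  finally show ?thesis .
qed

lemma curv_against_s_coord:
  assumes m: "1 \<le> m" "m \<le> k" and abc: "a \<le> k" "b \<le> k" "c \<le> k"
    and R_zero: "\<And>d. d < dimF k \<Longrightarrow> Rmodel k a b c d = 0"
  shows "curv_coef 0 m (P m) * wedge_u0_ui_eval m (B a) (B b) * B c m = 0"
proof -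
  let ?s = "unit_vec (Suc (2*k+m))" and ?R = "curv (dimF k) (gF k F eps)"
  have sN: "Suc (2*k+m) < dimF k" and abcN: "a < dimF k" "b < dimF k" "c < dimF k"
    using m abc by (auto simp: dimF_eq)
  obtain c' where c': "\<forall>n<dimF k. (\<Sum>b<dimF k. c' b * B b n) = ?s n"
    using unit_vec_in_span[OF sN] .
  have "teval (dimF k) ?R P [B a, B b, B c, ?s] = teval (dimF k) (nabla_curv_F 0) P [B a, B b, B c, ?s]"
    using teval_cov_iter_curv_gF[of "[B a, B b, B c, ?s]" 0 3 P] by (simp add: unit_vec_def numeral_3_eq_3)
  also have "\<dots> = (\<Sum>i\<in>{1..k}. if i = m then curv_coef 0 m (P m) * wedge_u0_ui_eval m (B a) (B b) * B c m else 0)"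
    unfolding teval_nabla_curv_F
    by (rule sum.cong[OF refl]) (auto simp: wedge_u0_ui_eval_def wedge_ui_si_eval_def unit_vec_def)
  also have "\<dots> = curv_coef 0 m (P m) * wedge_u0_ui_eval m (B a) (B b) * B c m" using m by simp
  finally have "teval (dimF k) ?R P [B a, B b, B c, ?s] = curv_coef 0 m (P m) * wedge_u0_ui_eval m (B a) (B b) * B c m" .
  moreover have "teval (dimF k) ?R P [B a, B b, B c, ?s] =
      teval (dimF k) ?R P ([B a, B b, B c, B 0][3 := (\<lambda>n. \<Sum>b<dimF k. c' b * B b n)])"
    by (rule teval_cong) (use c' in \<open>auto simp: nth_Cons' numeral_3_eq_3\<close>)
  moreover have "\<dots> = (\<Sum>d<dimF k. c' d * teval (dimF k) ?R P ([B a, B b, B c, B 0][3 := B d]))"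
    by (rule teval_linear_slot) auto
  moreover have "\<dots> = 0"
    by (intro sum.neutral ballI) (simp add: numeral_3_eq_3 curv_B abcN R_zero)
  ultimately show ?thesis by simp
qed

lemma nabla_curv_B:
  assumes j: "1 \<le> j" "j \<le> k"
  shows "teval (dimF k) ((cov (dimF k) (gF k F eps) ^^ l) (curv (dimF k) (gF k F eps))) P
           ([B 0, B j, B j, B (Suc (2*k+j))] @ replicate l (B j))
       = (\<Sum>i\<in>{1..k}. curv_coef l i (P i) *
            (wedge_u0_ui_eval i (B 0) (B j) * B j i * B (Suc (2*k+j)) (Suc (2*k+i)) * B j i ^ l))"
proof -
  have "teval (dimF k) ((cov (dimF k) (gF k F eps) ^^ l) (curv (dimF k) (gF k F eps))) P
           ([B 0, B j, B j, B (Suc (2*k+j))] @ replicate l (B j))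
      = teval (dimF k) (nabla_curv_F l) P (B 0 # B j # B j # B (Suc (2*k+j)) # replicate l (B j))"
    using teval_cov_iter_curv_gF[of "[B 0, B j, B j, B (Suc (2*k+j))] @ replicate l (B j)" l 3 P]
      B_s_u_zero[OF j] by (simp add: numeral_3_eq_3)
  also have "\<dots> = (\<Sum>i\<in>{1..k}. curv_coef l i (P i) *
            (wedge_u0_ui_eval i (B 0) (B j) * B j i * B (Suc (2*k+j)) (Suc (2*k+i)) * B j i ^ l))"
    unfolding teval_nabla_curv_F
  proof (rule sum.cong[OF refl])
    fix i assume "i \<in> {1..k}"
    then have "wedge_u0_ui_eval i (B j) (B (Suc (2*k+j))) = 0"
      "wedge_ui_si_eval i (B j) (B (Suc (2*k+j))) = B j i * B (Suc (2*k+j)) (Suc (2*k+i))"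
      unfolding wedge_u0_ui_eval_def wedge_ui_si_eval_def using B_s_u_zero[OF j] by auto
    moreover have "(\<Prod>Y\<leftarrow>replicate l (B j). Y i) = B j i ^ l" by (induction l) auto
    ultimately show "curv_coef l i (P i) *
        ((wedge_u0_ui_eval i (B 0) (B j) * wedge_ui_si_eval i (B j) (B (Suc (2*k+j)))
          + wedge_ui_si_eval i (B 0) (B j) * wedge_u0_ui_eval i (B j) (B (Suc (2*k+j))))
         * (\<Prod>Y\<leftarrow>replicate l (B j). Y i))
      = curv_coef l i (P i) *
          (wedge_u0_ui_eval i (B 0) (B j) * B j i * B (Suc (2*k+j)) (Suc (2*k+i)) * B j i ^ l)"
      by (simp add: algebra_simps)
  qed
  finally show ?thesis .
qed

lemma curv_B_normalization:
  assumes j: "1 \<le> j" "j \<le> k"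
  shows "(\<Sum>i\<in>{1..k}. curv_coef 0 i (P i) *
            (wedge_u0_ui_eval i (B 0) (B j) * B j i * B (Suc (2*k+j)) (Suc (2*k+i)))) = 1"
proof -
  have N: "0 < dimF k" "j < dimF k" "Suc (2*k+j) < dimF k" using j by (auto simp: dimF_eq)
  have "Rmodel k 0 j j (Suc (2*k+j)) = 1"
    using j by (simp add: Rmodel_uuu cong: sum.cong)
  then show ?thesis using curv_B[OF N(1,2,2,3)] nabla_curv_B[OF j, of 0] by simp
qed

lemma unit_v_combination:
  assumes m: "m \<le> k" "m' \<le> k" and n: "n < dimF k"
    and coef: "\<And>a. a \<le> k \<Longrightarrow> x * B a m - y * B a m' = 0"
  shows "x * unit_vec (Suc (k+m)) n - y * unit_vec (Suc (k+m')) n = 0"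
proof -
  have "x * unit_vec (Suc (k+m)) n - y * unit_vec (Suc (k+m')) n =
      (\<Sum>a\<in>{..k}. (x * B a m - y * B a m') * B (Suc (k+a)) n)"
    unfolding unit_v_expansion[OF m(1) n] unit_v_expansion[OF m(2) n]
    by (simp add: sum_distrib_left sum_subtractf algebra_simps)
  also have "\<dots> = 0" using coef by (simp add: sum.neutral)
  finally show ?thesis .
qed

lemma B0_u_zero:
  assumes m: "1 \<le> m" "m \<le> k"
  shows "B 0 m = 0"
proof (rule ccontr)
  assume nz: "B 0 m \<noteq> 0"
  have "wedge_u0_ui_eval m (B a) (B 0) = 0" if a: "a \<le> k" for a
    using curv_against_s_coord[OF m a _ _, of 0 0] curv_coef_0_nonzero[OF m] nz a
    by (auto simp: Rmodel_third_u0)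
  then have coef: "B 0 0 * B a m - B 0 m * B a 0 = 0" if "a \<le> k" for a
    using that unfolding wedge_u0_ui_eval_def right_minus_eq by (metis mult.commute)
  have "B 0 0 * unit_vec (Suc (k+m)) (Suc k) - B 0 m * unit_vec (Suc (k+0)) (Suc k) = 0"
    by (rule unit_v_combination[OF m(2) _ _ coef]) (auto simp: dimF_eq)
  then show False using nz m by (simp add: unit_vec_def)
qed

lemma wedge_u0_ui_eval_B0: "1 \<le> i \<Longrightarrow> i \<le> k \<Longrightarrow> wedge_u0_ui_eval i (B 0) (B j) = B 0 0 * B j i"
  unfolding wedge_u0_ui_eval_def using B0_u_zero by simp

lemma B00_nonzero: "B 0 0 \<noteq> 0"
proof
  assume "B 0 0 = 0"
  then have "(\<Sum>i\<in>{1..k}. curv_coef 0 i (P i) *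
      (wedge_u0_ui_eval i (B 0) (B 1) * B 1 i * B (Suc (2*k+1)) (Suc (2*k+i)))) = 0"
    by (intro sum.neutral) (simp add: wedge_u0_ui_eval_B0)
  then show False using curv_B_normalization[of 1] k_ge_1 by simp
qed

lemma B_u_column_disjoint:
  assumes j: "1 \<le> j" "j \<le> k" and j': "1 \<le> j'" "j' \<le> k" and "j \<noteq> j'" and m: "1 \<le> m" "m \<le> k"
  shows "B j m * B j' m = 0"
proof -
  have "curv_coef 0 m (P m) * wedge_u0_ui_eval m (B 0) (B j') * B j m = 0"
    using Rmodel_first_u0_distinct[OF j'(2) j(2)] assms by (intro curv_against_s_coord) auto
  then have "curv_coef 0 m (P m) * B 0 0 * (B j m * B j' m) = 0"
    using wedge_u0_ui_eval_B0[OF m] by (simp add: algebra_simps)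
  then show ?thesis using curv_coef_0_nonzero[OF m] B00_nonzero by simp
qed

lemma B_u_row_nonzero:
  assumes j: "1 \<le> j" "j \<le> k"
  shows "\<exists>i\<in>{1..k}. B j i \<noteq> 0"
proof (rule ccontr)
  assume "\<not> ?thesis"
  then have "(\<Sum>i\<in>{1..k}. curv_coef 0 i (P i) *
      (wedge_u0_ui_eval i (B 0) (B j) * B j i * B (Suc (2*k+j)) (Suc (2*k+i)))) = 0"
    by (simp add: sum.neutral)
  then show False using curv_B_normalization[OF j] by simp
qed

lemma B_u_row_single:
  assumes j: "1 \<le> j" "j \<le> k" and m: "1 \<le> m" "m \<le> k" and m': "1 \<le> m'" "m' \<le> k" and "m \<noteq> m'"
    and nz: "B j m \<noteq> 0"
  shows "B j m' = 0"
proof (rule ccontr)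
  assume nz': "B j m' \<noteq> 0"
  have coef: "B j m' * B a m - B j m * B a m' = 0" if a: "a \<le> k" for a
  proof (cases "a = 0 \<or> a = j")
    case True
    then show ?thesis using B0_u_zero[OF m] B0_u_zero[OF m'] by auto
  next
    case False
    then have "B a m = 0" "B a m' = 0"
      using B_u_column_disjoint[OF _ a j _ m] B_u_column_disjoint[OF _ a j _ m'] nz nz' by auto
    then show ?thesis by simp
  qed
  have "B j m' * unit_vec (Suc (k+m)) (Suc (k+m)) - B j m * unit_vec (Suc (k+m')) (Suc (k+m)) = 0"
    by (rule unit_v_combination[OF m(2) m'(2) _ coef]) (use m in \<open>simp add: dimF_eq\<close>)
  then show False using nz' \<open>m \<noteq> m'\<close> by (simp add: unit_vec_def)
qed

lemma B_u_column_nonzero: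
  assumes m: "1 \<le> m" "m \<le> k"
  shows "\<exists>j\<in>{1..k}. B j m \<noteq> 0"
proof (rule ccontr)
  assume "\<not> ?thesis"
  then have "B a m = 0" if "a \<le> k" for a
    using that B0_u_zero[OF m] by (cases "a = 0") auto
  then have "(\<Sum>a\<in>{..k}. B a m * B (Suc (k+a)) (Suc (k+m))) = 0"
    by (simp add: sum.neutral)
  then show False using unit_v_expansion[OF m(2), of "Suc (k+m)"] m by (simp add: unit_vec_def dimF_eq)
qed

lemma beta_summand:
  assumes j: "1 \<le> j" "j \<le> k" and l: "l \<ge> 1"
  shows "teval (dimF k) ((cov (dimF k) (gF k F eps) ^^ l) (curv (dimF k) (gF k F eps))) P
           ([B 0, B j, B j, B (Suc (2*k+j))] @ replicate l (B j))
       / (teval (dimF k) ((cov (dimF k) (gF k F eps) ^^ 1) (curv (dimF k) (gF k F eps))) P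
           ([B 0, B j, B j, B (Suc (2*k+j))] @ replicate 1 (B j))) ^ l
       = (\<Sum>i\<in>{1..k}. if B j i \<noteq> 0 then beta_term l P i else 0)"
proof -
  obtain i0 where i0: "i0 \<in> {1..k}" "B j i0 \<noteq> 0" using B_u_row_nonzero[OF j] by blast
  have other: "B j i = 0" if "i \<in> {1..k}" "i \<noteq> i0" for i
    using B_u_row_single[OF j, of i0 i] i0 that by auto
  let ?q = "B j i0" and ?w = "B 0 0 * B j i0 * B j i0 * B (Suc (2*k+j)) (Suc (2*k+i0))"
  have single: "(\<Sum>i\<in>{1..k}. curv_coef L i (P i) *
        (wedge_u0_ui_eval i (B 0) (B j) * B j i * B (Suc (2*k+j)) (Suc (2*k+i)) * B j i ^ L'))
      = curv_coef L i0 (P i0) * (?w * ?q ^ L')" for L L'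
    using i0(1) by (subst sum_eq_single[OF _ i0(1)]) (auto simp: other wedge_u0_ui_eval_B0 algebra_simps)
  have norm: "curv_coef 0 i0 (P i0) * ?w = 1"
    using curv_B_normalization[OF j] single[of 0 0] by simp
  have "teval (dimF k) ((cov (dimF k) (gF k F eps) ^^ l) (curv (dimF k) (gF k F eps))) P
           ([B 0, B j, B j, B (Suc (2*k+j))] @ replicate l (B j))
       / (teval (dimF k) ((cov (dimF k) (gF k F eps) ^^ 1) (curv (dimF k) (gF k F eps))) P
           ([B 0, B j, B j, B (Suc (2*k+j))] @ replicate 1 (B j))) ^ l
       = (curv_coef l i0 (P i0) * (?w * ?q ^ l)) / (curv_coef 1 i0 (P i0) * (?w * ?q)) ^ l"
    unfolding nabla_curv_B[OF j] single by simp
  also have "\<dots> = beta_term l P i0"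
    unfolding beta_term_def by (rule ratio_power_cancel[OF norm i0(2) l])
  also have "\<dots> = (\<Sum>i\<in>{1..k}. if B j i \<noteq> 0 then beta_term l P i else 0)"
    by (subst sum_eq_single[OF _ i0(1)]) (use other i0 in auto)
  finally show ?thesis .
qed

lemma beta_eq_sum_beta_term:
  assumes l: "l \<ge> 1"
  shows "beta k F eps l P B = (\<Sum>i\<in>{1..k}. beta_term l P i)"
proof -
  have "beta k F eps l P B = (\<Sum>j\<in>{1..k}. \<Sum>i\<in>{1..k}. if B j i \<noteq> 0 then beta_term l P i else 0)"
    unfolding beta_def Let_def
  proof (rule sum.cong[OF refl])
    fix j assume "j \<in> {1..k}"
    then have j: "1 \<le> j" "j \<le> k" by auto
    show "teval (dimF k) ((cov (dimF k) (gF k F eps) ^^ l) (curv (dimF k) (gF k F eps))) P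
            ([B 0, B j, B j, B (2 * k + 1 + j)] @ replicate l (B j)) /
          teval (dimF k) (cov (dimF k) (gF k F eps) (curv (dimF k) (gF k F eps))) P
            [B 0, B j, B j, B (2 * k + 1 + j), B j] ^ l
          = (\<Sum>i\<in>{1..k}. if B j i \<noteq> 0 then beta_term l P i else 0)"
      using beta_summand[OF j l] by simp
  qed
  also have "\<dots> = (\<Sum>i\<in>{1..k}. \<Sum>j\<in>{1..k}. if B j i \<noteq> 0 then beta_term l P i else 0)"
    by (rule sum.swap)
  also have "\<dots> = (\<Sum>i\<in>{1..k}. beta_term l P i)"
  proof (rule sum.cong[OF refl])
    fix i assume "i \<in> {1..k}"
    then have i: "1 \<le> i" "i \<le> k" by auto
    obtain j0 where j0: "j0 \<in> {1..k}" "B j0 i \<noteq> 0" using B_u_column_nonzero[OF i] by blast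
    have "B j i = 0" if "j \<in> {1..k}" "j \<noteq> j0" for j
      using B_u_column_disjoint[of j j0 i] that j0 i by auto
    then show "(\<Sum>j\<in>{1..k}. if B j i \<noteq> 0 then beta_term l P i else 0) = beta_term l P i"
      using j0 by (subst sum_eq_single[OF _ j0(1)]) auto
  qed
  finally show ?thesis .
qed

end

theorem lemma5p2:
  fixes k l :: nat and F :: "nat \<Rightarrow> real \<Rightarrow> real" and eps :: "nat \<Rightarrow> real"
    and P :: "nat \<Rightarrow> real" and B B' :: "nat \<Rightarrow> nat \<Rightarrow> real"
  assumes "k \<ge> 1"
    and "\<forall>j\<in>{1..k}. eps j = 1 \<or> eps j = -1"
    and "\<forall>j\<in>{1..k}. smooth_real (F j)"
    and "\<forall>j\<in>{1..k}. \<forall>u. deriv (F j) u + 1 \<noteq> 0"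
    and "\<forall>j\<in>{1..k}. \<forall>u. deriv (deriv (F j)) u \<noteq> 0"
    and "l \<ge> 2"
    and "normalized_basis k F eps P B"
    and "normalized_basis k F eps P B'"
  shows "beta k F eps l P B = beta k F eps l P B'"
proof -
  interpret frame_B: normalized_frame k F eps P B
    using assms by unfold_locales auto
  interpret frame_B': normalized_frame k F eps P B'
    using assms by unfold_locales auto
  show ?thesis
    using frame_B.beta_eq_sum_beta_term frame_B'.beta_eq_sum_beta_term assms(6) by simp
qed

end
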